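(* Lattices $-A_1+\langle6\rangle+t A_1$ are chiral for $t=0,1$ and achiral for $t\ge2$.
   Context: Here $0\le t\le 9$; $A_1$ is the root lattice $\langle2\rangle$, $-A_1=\langle-2\rangle$, $\langle6\rangle$ the rank one lattice with generator of square 6, $+$ orthogonal sum. For an even hyperbolic lattice $\mathbb L$ with $\operatorname{discr}_3\mathbb L=\mathbb Z/3$ and $\operatorname{discr}_2$ of period 2: $W$ is generated by reflections in 2-roots ($v^2=2$) and 6-roots ($v^2=6$, $v\cdot\mathbb L\subset3\mathbb Z$); cells $P$ are fundamental chambers of $W$ in the hyperbolic space, lifting to $\pm P^\#$ in the double cover. An automorphism is $P$-direct if it preserves $P^\#$, $\mathbb Z/3$-reversing if it acts as $-\operatorname{id}$ on $\operatorname{discr}_3\mathbb L$. $\mathbb L$ is achiral if it admits an automorphism that is $\mathbb Z/3$-reversing and $P$-direct for some cell $P$, chiral otherwise. *)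

theory Defs
  imports Complex_Main
begin

text \<open>The lattice L_t = -A1 + <6> + t A1 is realised as Z^(t+2) with diagonal Gram
matrix diag(-2, 6, 2, ..., 2).\<close>

definition dimL :: "nat \<Rightarrow> nat" where
  "dimL t = t + 2"

definition gramd :: "nat \<Rightarrow> real" where
  "gramd i = (if i = 0 then -2 else if i = 1 then 6 else 2)"

definition vecs :: "nat \<Rightarrow> (nat \<Rightarrow> real) set" where
  "vecs t = {x. \<forall>i\<ge>dimL t. x i = 0}"

definition lat :: "nat \<Rightarrow> (nat \<Rightarrow> real) set" where
  "lat t = {x \<in> vecs t. \<forall>i<dimL t. x i \<in> \<int>}"

definition form :: "nat \<Rightarrow> (nat \<Rightarrow> real) \<Rightarrow> (nat \<Rightarrow> real) \<Rightarrow> real" where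
  "form t x y = (\<Sum>i<dimL t. gramd i * x i * y i)"

definition dual :: "nat \<Rightarrow> (nat \<Rightarrow> real) set" where
  "dual t = {x \<in> vecs t. \<forall>y\<in>lat t. form t x y \<in> \<int>}"

definition matapp :: "nat \<Rightarrow> (nat \<Rightarrow> nat \<Rightarrow> int) \<Rightarrow> (nat \<Rightarrow> real) \<Rightarrow> (nat \<Rightarrow> real)" where
  "matapp t g x = (\<lambda>i. if i < dimL t then (\<Sum>j<dimL t. of_int (g i j) * x j) else 0)"

definition is_aut :: "nat \<Rightarrow> (nat \<Rightarrow> nat \<Rightarrow> int) \<Rightarrow> bool" where
  "is_aut t g \<longleftrightarrow> bij_betw (matapp t g) (lat t) (lat t) \<and>
     (\<forall>x\<in>lat t. \<forall>y\<in>lat t. form t (matapp t g x) (matapp t g y) = form t x y)"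

text \<open>Z/3-reversing: acts as -id on discr_3 L, the 3-primary part of L^*/L.\<close>
definition z3_reversing :: "nat \<Rightarrow> (nat \<Rightarrow> nat \<Rightarrow> int) \<Rightarrow> bool" where
  "z3_reversing t g \<longleftrightarrow>
     (\<forall>x\<in>dual t. (\<exists>k::nat. (\<lambda>i. 3 ^ k * x i) \<in> lat t) \<longrightarrow>
        (\<lambda>i. matapp t g x i + x i) \<in> lat t)"

definition is_root :: "nat \<Rightarrow> (nat \<Rightarrow> real) \<Rightarrow> bool" where
  "is_root t v \<longleftrightarrow> v \<in> lat t \<and>
     (form t v v = 2 \<or>
      (form t v v = 6 \<and> (\<forall>y\<in>lat t. \<exists>k::int. form t v y = 3 * of_int k)))"

text \<open>The negative cone of L tensor R; its rays form the double cover of the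
hyperbolic space (two sheets = the two components of the cone).\<close>
definition negcone :: "nat \<Rightarrow> (nat \<Rightarrow> real) set" where
  "negcone t = {x \<in> vecs t. form t x x < 0}"

text \<open>The lift P^# of the cell containing the generic point x: the connected component of
x in the complement of all mirrors of W within the sheet of the cone containing x
(equivalently, the set of points of that sheet on the same side of every mirror).\<close>
definition chamber :: "nat \<Rightarrow> (nat \<Rightarrow> real) \<Rightarrow> (nat \<Rightarrow> real) set" where
  "chamber t x = {y \<in> negcone t. form t x y < 0 \<and>
      (\<forall>v. is_root t v \<longrightarrow> sgn (form t y v) = sgn (form t x v))}"

definition is_cell_lift :: "nat \<Rightarrow> (nat \<Rightarrow> real) set \<Rightarrow> bool" where
  "is_cell_lift t C \<longleftrightarrow>
     (\<exists>x\<in>negcone t. (\<forall>v. is_root t v \<longrightarrow> form t x v \<noteq> 0) \<and> C = chamber t x)"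

definition achiral :: "nat \<Rightarrow> bool" where
  "achiral t \<longleftrightarrow> (\<exists>g C. is_aut t g \<and> z3_reversing t g \<and> is_cell_lift t C \<and>
                        matapp t g ` C = C)"

definition chiral :: "nat \<Rightarrow> bool" where
  "chiral t \<longleftrightarrow> \<not> achiral t"

end

theory Submission
  imports Defs
begin

text \<open>For \<open>t \<ge> 2\<close> an explicit integral involution of \<open>-A\<^sub>1 + \<langle>6\<rangle> + 2A\<^sub>1\<close>, extended by the
  identity, acts as \<open>-1\<close> on \<open>discr\<^sub>3 L = \<langle>e\<^sub>1/3\<rangle>\<close> and fixes a negative vector whose last
  coordinates are irrational.  That vector lies on no mirror, so the involution preserves the cell
  containing it.

  For \<open>t \<le> 1\<close> the lattice has rank 3, and the roots \<open>r\<^sub>1, \<dots>, r\<^sub>4\<close> (only \<open>r\<^sub>1, r\<^sub>4\<close> for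
  \<open>t = 0\<close>) cut out a cone containing no mirror.  Every cell is moved into this cone by an isometry:
  in the orbit of a lattice point \<open>p\<close> of the cone take the point nearest to a generic point of the
  cell; reflecting in a violated wall would bring it nearer.  So an automorphism preserving a cell
  is conjugate to an isometry \<open>F\<close> mapping \<open>p\<close> into the cone.  As \<open>p\<close> is the only lattice point
  of its norm in the cone (and, for \<open>t = 1\<close>, \<open>e\<^sub>2\<close> is determined by \<open>e\<^sub>2\<^sup>2 = p\<cdot>e\<^sub>2 = 2\<close>), \<open>F\<close>
  fixes a vector \<open>q \<equiv> e\<^sub>1 (mod 3L)\<close>, hence acts trivially on \<open>\<langle>e\<^sub>1/3\<rangle>\<close> rather than as \<open>-1\<close>.\<close>

definition unit_vec :: "nat \<Rightarrow> nat \<Rightarrow> real" where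
  "unit_vec j = (\<lambda>i. if i = j then 1 else 0)"

lemma latD: "x \<in> lat t \<Longrightarrow> i < dimL t \<Longrightarrow> x i \<in> \<int>"
  by (simp add: lat_def)

lemma latI: "x \<in> vecs t \<Longrightarrow> (\<And>i. i < dimL t \<Longrightarrow> x i \<in> \<int>) \<Longrightarrow> x \<in> lat t"
  by (simp add: lat_def)

lemma lat_imp_vecs: "x \<in> lat t \<Longrightarrow> x \<in> vecs t"
  by (simp add: lat_def)

lemma vecs_lincomb: "x \<in> vecs t \<Longrightarrow> y \<in> vecs t \<Longrightarrow> (\<lambda>i. a * x i + y i) \<in> vecs t"
  by (simp add: vecs_def)

lemma vecs_scale: "x \<in> vecs t \<Longrightarrow> (\<lambda>i. a * x i) \<in> vecs t"
  by (simp add: vecs_def)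

lemma lat_diff: "x \<in> lat t \<Longrightarrow> y \<in> lat t \<Longrightarrow> (\<lambda>i. x i - y i) \<in> lat t"
  by (auto simp: lat_def vecs_def)

lemma lat_uminus: "x \<in> lat t \<Longrightarrow> (\<lambda>i. - x i) \<in> lat t"
  by (auto simp: lat_def vecs_def)

lemma lat_scale_Ints: "x \<in> lat t \<Longrightarrow> a \<in> \<int> \<Longrightarrow> (\<lambda>i. a * x i) \<in> lat t"
  by (auto simp: lat_def vecs_def)

lemma unit_vec_vecs: "j < dimL t \<Longrightarrow> unit_vec j \<in> vecs t"
  by (auto simp: vecs_def unit_vec_def)

lemma unit_vec_lat: "j < dimL t \<Longrightarrow> unit_vec j \<in> lat t"
  by (auto simp: lat_def vecs_def unit_vec_def)

lemma vecs_eq_sum_unit_vec: "x \<in> vecs t \<Longrightarrow> x = (\<lambda>i. \<Sum>k<dimL t. x k * unit_vec k i)"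
  by (rule ext) (auto simp: unit_vec_def vecs_def if_distrib cong: if_cong)

lemma form_commute: "form t x y = form t y x"
  unfolding form_def by (simp add: mult_ac)

lemma form_unit_vec: "form t x (unit_vec j) = (if j < dimL t then gramd j * x j else 0)"
  by (simp add: form_def unit_vec_def if_distrib cong: if_cong)

lemma form_lincomb: "form t (\<lambda>i. a * x i + y i) z = a * form t x z + form t y z"
  unfolding form_def by (simp add: algebra_simps sum.distrib sum_distrib_left)

lemma form_scale: "form t (\<lambda>i. a * x i) z = a * form t x z"
  using form_lincomb[of t a x "\<lambda>i. 0" z] by (simp add: form_def)

lemma form_diff_scale: "form t (\<lambda>i. x i - a * y i) z = form t x z - a * form t y z"
  using form_lincomb[of t "-a" y x z] by (simp add: algebra_simps)

lemma form_uminus: "form t (\<lambda>i. - x i) z = - form t x z"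
  using form_scale[of t "-1" x z] by simp

lemma form_sum: "form t (\<lambda>i. \<Sum>j\<in>J. c j * a j i) z = (\<Sum>j\<in>J. c j * form t (a j) z)"
  unfolding form_def by (simp add: sum_distrib_left sum_distrib_right mult_ac sum.swap[of _ J])

lemma form_lat_Ints: "x \<in> lat t \<Longrightarrow> y \<in> lat t \<Longrightarrow> form t x y \<in> \<int>"
  unfolding form_def by (intro Ints_sum Ints_mult) (auto simp: gramd_def dest: latD)

lemma root_lat: "is_root t v \<Longrightarrow> v \<in> lat t"
  by (simp add: is_root_def)

lemma root_vecs: "is_root t v \<Longrightarrow> v \<in> vecs t"
  by (simp add: is_root_def lat_def)

lemma root_norm: "is_root t v \<Longrightarrow> form t v v = 2 \<or> form t v v = 6"
  by (auto simp: is_root_def)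

lemma root_norm_pos: "is_root t v \<Longrightarrow> form t v v > 0"
  using root_norm by fastforce

lemma lat_eq_of_int_floor: "v \<in> lat t \<Longrightarrow> i < dimL t \<Longrightarrow> v i = of_int \<lfloor>v i\<rfloor>"
  using latD by (metis Ints_cases floor_of_int)

lemma six_root_coord_dvd:
  assumes r: "is_root t v" and n6: "form t v v = 6" and j: "j < dimL t" "j \<noteq> 1"
  shows "3 dvd \<lfloor>v j\<rfloor>"
proof -
  obtain k :: int where k: "form t v (unit_vec j) = 3 * of_int k"
    using r n6 unit_vec_lat[OF j(1)] unfolding is_root_def by force
  have "gramd j = 2 \<or> gramd j = -2" using j(2) by (simp add: gramd_def)
  moreover have "gramd j * of_int \<lfloor>v j\<rfloor> = of_int (3 * k)"
    using k j(1) lat_eq_of_int_floor[OF root_lat[OF r] j(1)] by (simp add: form_unit_vec)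
  ultimately have "of_int (2 * \<lfloor>v j\<rfloor>) = (of_int (3 * k) :: real) \<or>
      of_int (- 2 * \<lfloor>v j\<rfloor>) = (of_int (3 * k) :: real)"
    by auto
  then have "2 * \<lfloor>v j\<rfloor> = 3 * k \<or> - 2 * \<lfloor>v j\<rfloor> = 3 * k" by (simp only: of_int_eq_iff)
  then show ?thesis by presburger
qed

section \<open>Lattice isometries\<close>

definition linear_on :: "nat \<Rightarrow> ((nat \<Rightarrow> real) \<Rightarrow> (nat \<Rightarrow> real)) \<Rightarrow> bool" where
  "linear_on t f \<longleftrightarrow>
     (\<forall>x\<in>vecs t. \<forall>y\<in>vecs t. \<forall>a. f (\<lambda>i. a * x i + y i) = (\<lambda>i. a * f x i + f y i))"

text \<open>An isometry of the lattice together with its inverse; unlike \<^const>\<open>is_aut\<close> it need not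
  be given by a matrix, which makes reflections and compositions easy to handle.\<close>

definition isometry ::
    "nat \<Rightarrow> ((nat \<Rightarrow> real) \<Rightarrow> (nat \<Rightarrow> real)) \<Rightarrow> ((nat \<Rightarrow> real) \<Rightarrow> (nat \<Rightarrow> real)) \<Rightarrow> bool" where
  "isometry t f f' \<longleftrightarrow> linear_on t f \<and>
     (\<forall>x\<in>vecs t. f x \<in> vecs t \<and> f' x \<in> vecs t \<and> f' (f x) = x \<and> f (f' x) = x) \<and>
     (\<forall>x\<in>vecs t. \<forall>y\<in>vecs t. form t (f x) (f y) = form t x y) \<and>
     (\<forall>x\<in>lat t. f x \<in> lat t \<and> f' x \<in> lat t)"

lemma linear_onD:
  "linear_on t f \<Longrightarrow> x \<in> vecs t \<Longrightarrow> y \<in> vecs t \<Longrightarrow> f (\<lambda>i. a * x i + y i) = (\<lambda>i. a * f x i + f y i)"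
  by (simp add: linear_on_def)

lemma linear_on_scale: "linear_on t f \<Longrightarrow> x \<in> vecs t \<Longrightarrow> f (\<lambda>i. a * x i) = (\<lambda>i. a * f x i)"
proof -
  assume f: "linear_on t f" and x: "x \<in> vecs t"
  have z: "(\<lambda>i. 0) \<in> vecs t" by (simp add: vecs_def)
  have "f (\<lambda>i. 0) = (\<lambda>i. f (\<lambda>i. 0) i + f (\<lambda>i. 0) i)"
    using linear_onD[OF f z z, of 1] by simp
  then have "f (\<lambda>i. 0) = (\<lambda>i. 0)" by (metis add_cancel_right_right ext)
  then show ?thesis using linear_onD[OF f x z, of a] by simp
qed

lemma linear_on_diff:
  "linear_on t f \<Longrightarrow> x \<in> vecs t \<Longrightarrow> y \<in> vecs t \<Longrightarrow> f (\<lambda>i. x i - y i) = (\<lambda>i. f x i - f y i)"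
  using linear_onD[of t f y x "-1"] by simp

lemma isometryD:
  assumes "isometry t f f'"
  shows "linear_on t f" "\<And>x. x \<in> vecs t \<Longrightarrow> f x \<in> vecs t" "\<And>x. x \<in> vecs t \<Longrightarrow> f' x \<in> vecs t"
    "\<And>x. x \<in> vecs t \<Longrightarrow> f' (f x) = x" "\<And>x. x \<in> vecs t \<Longrightarrow> f (f' x) = x"
    "\<And>x y. x \<in> vecs t \<Longrightarrow> y \<in> vecs t \<Longrightarrow> form t (f x) (f y) = form t x y"
    "\<And>x. x \<in> lat t \<Longrightarrow> f x \<in> lat t" "\<And>x. x \<in> lat t \<Longrightarrow> f' x \<in> lat t"
  using assms unfolding isometry_def by auto

lemma isometry_form_inverse:
  "isometry t f f' \<Longrightarrow> x \<in> vecs t \<Longrightarrow> y \<in> vecs t \<Longrightarrow> form t (f x) y = form t x (f' y)"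
  by (metis isometryD(3,5,6))

lemma isometry_inverse: "isometry t f f' \<Longrightarrow> isometry t f' f"
proof -
  assume i: "isometry t f f'"
  note D = isometryD[OF i]
  have "linear_on t f'"
    unfolding linear_on_def
  proof (intro ballI allI)
    fix x y a assume x: "x \<in> vecs t" and y: "y \<in> vecs t"
    have "f (\<lambda>i. a * f' x i + f' y i) = (\<lambda>i. a * x i + y i)"
      using linear_onD[OF D(1) D(3)[OF x] D(3)[OF y]] D(5)[OF x] D(5)[OF y] by simp
    then show "f' (\<lambda>i. a * x i + y i) = (\<lambda>i. a * f' x i + f' y i)"
      using D(4)[OF vecs_lincomb[OF D(3)[OF x] D(3)[OF y]]] by metis
  qed
  moreover have "form t (f' x) (f' y) = form t x y" if "x \<in> vecs t" "y \<in> vecs t" for x y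
    using D(6)[OF D(3)[OF that(1)] D(3)[OF that(2)]] D(5) that by simp
  ultimately show ?thesis unfolding isometry_def using D by blast
qed

lemma isometry_comp:
  "isometry t f f' \<Longrightarrow> isometry t g g' \<Longrightarrow> isometry t (\<lambda>x. g (f x)) (\<lambda>x. f' (g' x))"
  unfolding isometry_def linear_on_def by simp

lemma isometry_id: "isometry t (\<lambda>x. x) (\<lambda>x. x)"
  unfolding isometry_def linear_on_def by simp

lemma isometry_uminus: "isometry t (\<lambda>x i. - x i) (\<lambda>x i. - x i)"
  unfolding isometry_def linear_on_def
  by (auto simp: vecs_def lat_uminus form_def)

lemma isometry_root: "isometry t f f' \<Longrightarrow> is_root t v \<Longrightarrow> is_root t (f v)"
proof -
  assume i: "isometry t f f'" and r: "is_root t v"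
  note D = isometryD[OF i]
  have v: "v \<in> vecs t" using root_vecs[OF r] .
  have "\<exists>k::int. form t (f v) y = 3 * of_int k" if "y \<in> lat t" "form t v v = 6" for y
    using r D(8)[OF that(1)] that(2) isometry_form_inverse[OF i v lat_imp_vecs[OF that(1)]]
    unfolding is_root_def by auto
  then show ?thesis using r D(6)[OF v v] D(7)[OF root_lat[OF r]] unfolding is_root_def by auto
qed

lemma isometry_chamber:
  assumes i: "isometry t f f'" and a: "a \<in> vecs t" and w: "w \<in> chamber t a"
  shows "f w \<in> chamber t (f a)"
proof -
  note D = isometryD[OF i]
  have wv: "w \<in> vecs t" and wn: "form t w w < 0" and aw: "form t a w < 0"
    and sg: "\<And>v. is_root t v \<Longrightarrow> sgn (form t w v) = sgn (form t a v)"
    using w by (auto simp: chamber_def negcone_def)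
  have "sgn (form t (f w) v) = sgn (form t (f a) v)" if r: "is_root t v" for v
    using sg[OF isometry_root[OF isometry_inverse[OF i] r]] root_vecs[OF r]
    by (simp add: isometry_form_inverse[OF i wv] isometry_form_inverse[OF i a])
  then show ?thesis using D(2)[OF wv] D(6)[OF wv wv] D(6)[OF a wv] wn aw
    by (simp add: chamber_def negcone_def)
qed

lemma isometry_dual: "isometry t f f' \<Longrightarrow> u \<in> dual t \<Longrightarrow> f u \<in> dual t"
  using isometryD(2,8) isometry_form_inverse lat_imp_vecs by (fastforce simp: dual_def)

definition reflection :: "nat \<Rightarrow> (nat \<Rightarrow> real) \<Rightarrow> (nat \<Rightarrow> real) \<Rightarrow> (nat \<Rightarrow> real)" where
  "reflection t v = (\<lambda>z i. z i - (2 * form t z v / form t v v) * v i)"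

lemma form_reflection:
  "form t (reflection t v z) w = form t z w - 2 * form t z v * form t v w / form t v v"
  unfolding reflection_def using form_diff_scale[of t z "2 * form t z v / form t v v" v w] by simp

lemma form_reflection_self: "form t v v \<noteq> 0 \<Longrightarrow> form t (reflection t v z) v = - form t z v"
  by (simp add: form_reflection form_commute[of t v z])

text \<open>The reflection in a 6-root is integral because \<open>v\<cdot>L \<subseteq> 3\<int>\<close>.\<close>

lemma reflection_coeff_Ints:
  assumes r: "is_root t v" and z: "z \<in> lat t"
  shows "2 * form t z v / form t v v \<in> \<int>"
proof (cases "form t v v = 2")
  case True
  then show ?thesis using form_lat_Ints[OF z root_lat[OF r]] by simp
next
  case False
  then have 6: "form t v v = 6" using root_norm[OF r] by simp
  then obtain k :: int where "form t v z = 3 * of_int k" using r z unfolding is_root_def by auto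
  then show ?thesis using 6 form_commute[of t z v] by simp
qed

lemma isometry_reflection:
  assumes r: "is_root t v"
  shows "isometry t (reflection t v) (reflection t v)"
proof -
  have N: "form t v v \<noteq> 0" using root_norm_pos[OF r] by simp
  have "linear_on t (reflection t v)"
    unfolding linear_on_def reflection_def
  proof (intro ballI allI ext)
    fix x y a i
    show "a * x i + y i - 2 * form t (\<lambda>i. a * x i + y i) v / form t v v * v i =
        a * (x i - 2 * form t x v / form t v v * v i) + (y i - 2 * form t y v / form t v v * v i)"
      by (simp only: form_lincomb) (simp add: add_divide_distrib algebra_simps)
  qed
  moreover have "reflection t v z \<in> vecs t" if "z \<in> vecs t" for z
    using that root_vecs[OF r] unfolding reflection_def vecs_def by auto
  moreover have "reflection t v (reflection t v z) = z" for z
    using form_reflection_self[OF N, of z] unfolding reflection_def[of t v]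
    by (intro ext) (simp add: algebra_simps)
  moreover have "form t (reflection t v x) (reflection t v y) = form t x y" for x y
  proof -
    have "form t (reflection t v x) (reflection t v y)
        = form t x (reflection t v y) - 2 * form t x v * form t v (reflection t v y) / form t v v"
      by (rule form_reflection)
    also have "form t v (reflection t v y) = - form t y v"
      using form_reflection_self[OF N] form_commute by metis
    also have "form t x (reflection t v y) = form t x y - 2 * form t y v * form t v x / form t v v"
      using form_reflection[of t v y x] form_commute by metis
    finally show ?thesis using N by (simp add: field_simps form_commute[of t v x])
  qed
  moreover have "reflection t v z \<in> lat t" if "z \<in> lat t" for z
    unfolding reflection_def
    using lat_diff[OF that lat_scale_Ints[OF root_lat[OF r] reflection_coeff_Ints[OF r that]]] .
  ultimately show ?thesis unfolding isometry_def by blast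
qed

lemma form_reflection_gt:
  assumes "form t u u > 0" "form t q u < 0" "form t x u > 0"
  shows "form t x (reflection t u q) > form t x q"
proof -
  have "form t x (reflection t u q) = form t (reflection t u q) x" by (rule form_commute)
  also have "\<dots> = form t q x - 2 * form t q u * form t u x / form t u u" by (rule form_reflection)
  also have "form t u x = form t x u" by (rule form_commute)
  also have "form t q x = form t x q" by (rule form_commute)
  finally show ?thesis using assms by (simp add: divide_neg_pos mult_neg_pos)
qed

lemma form_reflection_le:
  assumes "form t u u > 0"
  shows "form t q (reflection t u q) \<le> form t q q"
proof -
  have "form t q (reflection t u q) = form t (reflection t u q) q" by (rule form_commute)
  also have "\<dots> = form t q q - 2 * form t q u * form t u q / form t u u" by (rule form_reflection)
  also have "form t u q = form t q u" by (rule form_commute)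
  finally show ?thesis using assms by (simp add: power2_eq_square[symmetric])
qed

lemma matapp_vecs: "matapp t g x \<in> vecs t"
  by (simp add: matapp_def vecs_def)

lemma matapp_lat: "x \<in> lat t \<Longrightarrow> matapp t g x \<in> lat t"
  by (rule latI[OF matapp_vecs]) (auto simp: matapp_def lat_def intro!: Ints_sum Ints_mult)

lemma linear_on_matapp: "linear_on t (matapp t g)"
  unfolding linear_on_def matapp_def
  by (auto simp: sum.distrib sum_distrib_left algebra_simps intro!: ext)

lemma matapp_sum:
  "matapp t g (\<lambda>i. \<Sum>k\<in>K. c k * a k i) = (\<lambda>i. \<Sum>k\<in>K. c k * matapp t g (a k) i)"
  unfolding matapp_def by (auto simp: sum_distrib_left mult_ac sum.swap[of _ K] intro!: ext)

lemma is_aut_form: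
  assumes a: "is_aut t h" and x: "x \<in> vecs t" and y: "y \<in> vecs t"
  shows "form t (matapp t h x) (matapp t h y) = form t x y"
proof -
  let ?H = "matapp t h" and ?n = "dimL t"
  have H: "?H z = (\<lambda>i. \<Sum>k<?n. z k * ?H (unit_vec k) i)" if "z \<in> vecs t" for z
  proof -
    have "?H z = ?H (\<lambda>i. \<Sum>k<?n. z k * unit_vec k i)"
      using vecs_eq_sum_unit_vec[OF that] by (rule arg_cong)
    then show ?thesis by (simp only: matapp_sum)
  qed
  have basis: "form t (?H (unit_vec l)) (?H (unit_vec k)) = (if l = k then gramd k else 0)"
    if "l < ?n" "k < ?n" for l k
  proof -
    have "form t (?H (unit_vec l)) (?H (unit_vec k)) = form t (unit_vec l) (unit_vec k)"
      using a unit_vec_lat[OF that(1)] unit_vec_lat[OF that(2)] unfolding is_aut_def by blast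
    then show ?thesis using that by (simp add: form_unit_vec, simp add: unit_vec_def)
  qed
  have "form t (?H (unit_vec k)) (?H y) = gramd k * y k" if k: "k < ?n" for k
  proof -
    have "form t (?H (unit_vec k)) (?H y) = (\<Sum>l<?n. y l * form t (?H (unit_vec l)) (?H (unit_vec k)))"
      by (subst form_commute, subst H[OF y]) (rule form_sum)
    also have "\<dots> = (\<Sum>l<?n. y l * (if l = k then gramd k else 0))"
      by (rule sum.cong) (simp_all add: basis k)
    also have "\<dots> = gramd k * y k"
      using k by (simp add: if_distrib cong: if_cong)
    finally show ?thesis .
  qed
  then have "form t (?H x) (?H y) = (\<Sum>k<?n. x k * (gramd k * y k))"
    by (subst H[OF x], subst form_sum) simp
  then show ?thesis by (simp add: form_def mult_ac)
qed

definition aut_inverse :: "nat \<Rightarrow> (nat \<Rightarrow> nat \<Rightarrow> int) \<Rightarrow> (nat \<Rightarrow> real) \<Rightarrow> (nat \<Rightarrow> real)" where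
  "aut_inverse t h z = (\<lambda>i. if i < dimL t then form t z (matapp t h (unit_vec i)) / gramd i else 0)"

lemma aut_inverse_matapp:
  assumes a: "is_aut t h" and x: "x \<in> vecs t"
  shows "aut_inverse t h (matapp t h x) = x"
proof
  fix i
  show "aut_inverse t h (matapp t h x) i = x i"
  proof (cases "i < dimL t")
    case True
    then show ?thesis
      using is_aut_form[OF a x unit_vec_vecs[OF True]] by (simp add: aut_inverse_def form_unit_vec gramd_def)
  next
    case False
    then show ?thesis using x by (simp add: aut_inverse_def vecs_def)
  qed
qed

lemma is_aut_isometry:
  assumes a: "is_aut t h"
  shows "isometry t (matapp t h) (aut_inverse t h)"
proof -
  let ?H = "matapp t h" and ?n = "dimL t" and ?G = "aut_inverse t h"
  note left = aut_inverse_matapp[OF a]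
  have G_vecs: "?G z \<in> vecs t" for z
    by (simp add: aut_inverse_def vecs_def)
  have G_lat: "?G z \<in> lat t \<and> ?H (?G z) = z" if z: "z \<in> lat t" for z
  proof -
    have "z \<in> ?H ` lat t" using a z by (simp add: is_aut_def bij_betw_def)
    then obtain w where w: "w \<in> lat t" "?H w = z" by blast
    then have "?G z = w" using left[OF lat_imp_vecs[OF w(1)]] by simp
    then show ?thesis using w by simp
  qed
  have right: "?H (?G z) = z" if z: "z \<in> vecs t" for z
  proof -
    have "?G z = (\<lambda>i. \<Sum>k<?n. z k * ?G (unit_vec k) i)"
    proof
      fix i
      have "form t z (?H (unit_vec i)) = (\<Sum>k<?n. z k * form t (unit_vec k) (?H (unit_vec i)))"
        by (subst vecs_eq_sum_unit_vec[OF z]) (rule form_sum)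
      then show "?G z i = (\<Sum>k<?n. z k * ?G (unit_vec k) i)"
        by (simp add: aut_inverse_def sum_divide_distrib)
    qed
    then have "?H (?G z) = (\<lambda>i. \<Sum>k<?n. z k * ?H (?G (unit_vec k)) i)"
      by (simp add: matapp_sum)
    also have "\<dots> = (\<lambda>i. \<Sum>k<?n. z k * unit_vec k i)"
      by (intro ext sum.cong) (simp_all add: G_lat[OF unit_vec_lat])
    also have "\<dots> = z"
      by (rule vecs_eq_sum_unit_vec[OF z, symmetric])
    finally show ?thesis .
  qed
  show ?thesis unfolding isometry_def
    using linear_on_matapp matapp_vecs G_vecs left right is_aut_form[OF a] matapp_lat G_lat by blast
qed

lemma isometry_is_aut:
  assumes i: "isometry t (matapp t g) g'"
  shows "is_aut t g"
proof -
  note D = isometryD[OF i]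
  have "inj_on (matapp t g) (lat t)"
    by (rule inj_on_inverseI[where g = g']) (simp add: D(4) lat_def)
  moreover have "matapp t g ` lat t = lat t"
  proof
    show "lat t \<subseteq> matapp t g ` lat t"
    proof
      fix z assume "z \<in> lat t"
      then show "z \<in> matapp t g ` lat t"
        using D(5)[OF lat_imp_vecs] D(8) by (metis image_eqI)
    qed
  qed (use matapp_lat in blast)
  ultimately show ?thesis
    unfolding is_aut_def bij_betw_def using D(6) lat_imp_vecs by blast
qed

section \<open>The discriminant group generated by e1/3\<close>

lemma z3_reversing_conjugate:
  assumes g: "is_aut t g" "z3_reversing t g" and f: "isometry t f f'"
    and u: "u \<in> dual t" "(\<lambda>i. 3 ^ k * u i) \<in> lat t"
  shows "(\<lambda>i. f (matapp t g (f' u)) i + u i) \<in> lat t"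
proof -
  note D = isometryD[OF f]
  have uv: "u \<in> vecs t" using u(1) by (simp add: dual_def)
  define a where "a = f' u"
  have av: "a \<in> vecs t" unfolding a_def using D(3)[OF uv] .
  have "(\<lambda>i. 3 ^ k * a i) = f' (\<lambda>i. 3 ^ k * u i)"
    unfolding a_def using linear_on_scale[OF isometryD(1)[OF isometry_inverse[OF f]] uv] by simp
  then have "(\<lambda>i. 3 ^ k * a i) \<in> lat t" using D(8)[OF u(2)] by simp
  moreover have "a \<in> dual t" unfolding a_def using isometry_dual[OF isometry_inverse[OF f] u(1)] .
  ultimately have l: "(\<lambda>i. matapp t g a i + a i) \<in> lat t" (is "?l \<in> _")
    using g(2) unfolding z3_reversing_def by blast
  have "f (matapp t g a) = f (\<lambda>i. ?l i - a i)" by simp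
  also have "\<dots> = (\<lambda>i. f ?l i - u i)"
    using linear_on_diff[OF D(1) lat_imp_vecs[OF l] av] D(5)[OF uv] unfolding a_def by simp
  finally show ?thesis using D(7)[OF l] unfolding a_def by simp
qed

lemma third_unit_vec_dual: "(\<lambda>i. unit_vec 1 i / 3) \<in> dual t"
proof -
  have "form t (\<lambda>i. unit_vec 1 i / 3) y = 2 * y 1" for y
    using form_scale[of t "1/3" "unit_vec 1" y] form_unit_vec[of t y 1] form_commute[of t y]
    by (simp add: dimL_def gramd_def)
  then show ?thesis
    using unit_vec_vecs[of 1 t] latD[of _ t 1] vecs_scale[of "unit_vec 1" t "1/3"]
    by (auto simp: dual_def dimL_def)
qed

lemma two_thirds_not_Ints: "(2 / 3 :: real) \<notin> \<int>"
proof
  assume "(2 / 3 :: real) \<in> \<int>"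
  then obtain n where "2 / 3 = real_of_int n" by (auto elim: Ints_cases)
  then have "real_of_int 2 = real_of_int (3 * n)" by simp
  then have "2 = 3 * n" by (simp only: of_int_eq_iff)
  then show False by presburger
qed

text \<open>An isometry fixing a vector \<open>q \<equiv> e\<^sub>1 (mod 3L)\<close> fixes \<open>e\<^sub>1/3 = q/3 - (q - e\<^sub>1)/3\<close> modulo
  \<open>L\<close>, so it cannot act as \<open>-1\<close> on \<open>\<langle>e\<^sub>1/3\<rangle>\<close>.\<close>

lemma fixing_imp_not_reversing:
  assumes F: "isometry t F F'" and q: "q \<in> lat t" "(\<lambda>i. (q i - unit_vec 1 i) / 3) \<in> lat t"
    and fixed: "F q = q"
  shows "(\<lambda>i. F (\<lambda>i. unit_vec 1 i / 3) i + unit_vec 1 i / 3) \<notin> lat t"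
proof
  define u where "u = (\<lambda>i. unit_vec 1 i / 3)"
  define m where "m = (\<lambda>i. (q i - unit_vec 1 i) / 3)"
  note lin = isometryD(1)[OF F]
  have qv: "q \<in> vecs t" and m: "m \<in> lat t" using lat_imp_vecs[OF q(1)] q(2) by (simp_all add: m_def)
  have u_eq: "u = (\<lambda>i. (1/3) * q i - m i)" by (auto simp: u_def m_def field_simps)
  have "F u = (\<lambda>i. (1/3) * q i - F m i)"
    unfolding u_eq using linear_on_diff[OF lin vecs_scale[OF qv, of "1/3"] lat_imp_vecs[OF m]]
      linear_on_scale[OF lin qv, of "1/3"] fixed by simp
  then have "(\<lambda>i. F u i + u i) = (\<lambda>i. 2 * u i - (F m i - m i))"
    by (auto simp: u_eq)
  moreover assume "(\<lambda>i. F (\<lambda>i. unit_vec 1 i / 3) i + unit_vec 1 i / 3) \<in> lat t"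
  ultimately have "(\<lambda>i. 2 * u i - (F m i - m i)) \<in> lat t" unfolding u_def by simp
  from lat_diff[OF this lat_diff[OF m isometryD(7)[OF F m]]] have "(\<lambda>i. 2 * u i) \<in> lat t"
    by simp
  then show False
    using latD[of _ t 1] two_thirds_not_Ints by (fastforce simp: u_def unit_vec_def dimL_def)
qed

section \<open>Achirality for t at least 2\<close>

lemma sqrt_2_not_rat: "sqrt 2 \<notin> \<rat>"
proof
  assume "sqrt 2 \<in> \<rat>"
  then obtain a b :: int where "b > 0" and cop: "coprime a b" and eq: "sqrt 2 = of_int a / of_int b"
    by (rule Rats_cases')
  then have "(sqrt 2 * of_int b)^2 = (of_int a :: real)^2" by simp
  then have "real_of_int (2 * b^2) = real_of_int (a^2)" by (simp add: power_mult_distrib)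
  then have e: "2 * b^2 = a^2" by (simp only: of_int_eq_iff)
  then have "even a" by (metis dvd_triv_left even_power zero_less_numeral)
  then obtain k where "a = 2 * k" by blast
  then have "b^2 = 2 * k^2" using e by (simp add: power_mult_distrib)
  then have "even b" by (metis dvd_triv_left even_power zero_less_numeral)
  then show False using coprime_common_divisor[OF cop \<open>even a\<close>] by simp
qed

lemma sum_lessThan_split4:
  fixes f :: "nat \<Rightarrow> 'a::comm_monoid_add"
  assumes "4 \<le> n"
  shows "(\<Sum>j<n. f j) = f 0 + f 1 + f 2 + f 3 + (\<Sum>j\<in>{4..<n}. f j)"
proof -
  have "(\<Sum>j<n. f j) = (\<Sum>j<4. f j) + (\<Sum>j\<in>{4..<n}. f j)"
    using sum.atLeastLessThan_concat[of 0 4 n f] assms by (simp add: lessThan_atLeast0)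
  then show ?thesis by (simp add: eval_nat_numeral)
qed

lemma form_split4:
  assumes "2 \<le> t"
  shows "form t x y = -2 * x 0 * y 0 + 6 * x 1 * y 1 + 2 * x 2 * y 2 + 2 * x 3 * y 3
    + (\<Sum>i\<in>{4..<dimL t}. 2 * x i * y i)"
proof -
  have "form t x y = gramd 0 * x 0 * y 0 + gramd 1 * x 1 * y 1 + gramd 2 * x 2 * y 2
      + gramd 3 * x 3 * y 3 + (\<Sum>i\<in>{4..<dimL t}. gramd i * x i * y i)"
    unfolding form_def using assms by (intro sum_lessThan_split4) (simp add: dimL_def)
  also have "(\<Sum>i\<in>{4..<dimL t}. gramd i * x i * y i) = (\<Sum>i\<in>{4..<dimL t}. 2 * x i * y i)"
    by (rule sum.cong) (auto simp: gramd_def)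
  finally show ?thesis by (simp add: gramd_def)
qed

text \<open>An integral involution of \<open>-A\<^sub>1 + \<langle>6\<rangle> + 2A\<^sub>1\<close> acting as \<open>-1\<close> on the discriminant
  group \<open>\<langle>e\<^sub>1/3\<rangle>\<close>, extended by the identity on the remaining summands.\<close>

definition rev_mat :: "nat \<Rightarrow> nat \<Rightarrow> int" where
  "rev_mat i j = (if i < 4 \<and> j < 4
     then [[3, 3, 2, 1], [-1, -1, -1, 0], [-2, -3, -1, -1], [-1, 0, -1, -1]] ! i ! j
     else if i = j then 1 else 0)"

definition rev_map :: "(nat \<Rightarrow> real) \<Rightarrow> (nat \<Rightarrow> real)" where
  "rev_map x = (\<lambda>i. if i = 0 then 3 * x 0 + 3 * x 1 + 2 * x 2 + x 3
     else if i = 1 then - x 0 - x 1 - x 2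
     else if i = 2 then - 2 * x 0 - 3 * x 1 - x 2 - x 3
     else if i = 3 then - x 0 - x 2 - x 3 else x i)"

lemma matapp_rev_mat:
  assumes t: "2 \<le> t" and x: "x \<in> vecs t"
  shows "matapp t rev_mat x = rev_map x"
proof
  fix i
  have n: "4 \<le> dimL t" using t by (simp add: dimL_def)
  show "matapp t rev_mat x i = rev_map x i"
  proof (cases "i < 4")
    case True
    have "(\<Sum>j\<in>{4..<dimL t}. of_int (rev_mat i j) * x j) = 0"
      using True by (intro sum.neutral) (auto simp: rev_mat_def)
    then have "matapp t rev_mat x i = (\<Sum>j<4. of_int (rev_mat i j) * x j)"
      using True n by (simp add: matapp_def sum_lessThan_split4[OF n] eval_nat_numeral)
    moreover have "i = 0 \<or> i = 1 \<or> i = 2 \<or> i = 3" using True by auto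
    ultimately show ?thesis by (auto simp: rev_mat_def rev_map_def eval_nat_numeral)
  next
    case False
    have "(\<Sum>j<dimL t. of_int (rev_mat i j) * x j) = (\<Sum>j<dimL t. if i = j then x j else 0)"
      using False by (intro sum.cong) (auto simp: rev_mat_def)
    then show ?thesis using False x by (simp add: matapp_def rev_map_def vecs_def)
  qed
qed

lemma rev_map_vecs: "2 \<le> t \<Longrightarrow> x \<in> vecs t \<Longrightarrow> rev_map x \<in> vecs t"
  by (auto simp: vecs_def rev_map_def dimL_def)

lemma isometry_rev_mat:
  assumes t: "2 \<le> t"
  shows "isometry t (matapp t rev_mat) (matapp t rev_mat)"
proof -
  have "matapp t rev_mat (matapp t rev_mat x) = x" if "x \<in> vecs t" for x
    using that rev_map_vecs[OF t that]
    by (simp add: matapp_rev_mat[OF t]) (intro ext, simp add: rev_map_def algebra_simps)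
  moreover have "form t (matapp t rev_mat x) (matapp t rev_mat y) = form t x y"
    if "x \<in> vecs t" "y \<in> vecs t" for x y
  proof -
    have "(\<Sum>i\<in>{4..<dimL t}. 2 * rev_map x i * rev_map y i) = (\<Sum>i\<in>{4..<dimL t}. 2 * x i * y i)"
      by (rule sum.cong) (auto simp: rev_map_def)
    then show ?thesis
      using that by (simp add: matapp_rev_mat[OF t] form_split4[OF t]) (simp add: rev_map_def algebra_simps)
  qed
  ultimately show ?thesis
    unfolding isometry_def using linear_on_matapp matapp_vecs matapp_lat by blast
qed

lemma Ints_of_double_and_pow3:
  fixes y :: real
  assumes "2 * y \<in> \<int>" "3 ^ k * y \<in> \<int>"
  shows "y \<in> \<int>"
proof -
  have "odd ((3::nat) ^ k)" by simp
  then obtain m :: nat where m: "(3::nat) ^ k = 2 * m + 1" by (rule oddE)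
  have "(3::real) ^ k = of_nat ((3::nat) ^ k)" by simp
  also have "\<dots> = 2 * of_nat m + 1" unfolding m by simp
  finally have "y = 3 ^ k * y - of_nat m * (2 * y)" by (simp add: algebra_simps)
  then show ?thesis using assms by (metis Ints_diff Ints_mult Ints_of_nat)
qed

lemma discr3_coords:
  assumes x: "x \<in> dual t" and k: "(\<lambda>i. 3 ^ k * x i) \<in> lat t"
  shows "i < dimL t \<Longrightarrow> i \<noteq> 1 \<Longrightarrow> x i \<in> \<int>" and "3 * x 1 \<in> \<int>"
proof -
  have dual_coord: "gramd i * x i \<in> \<int>" if "i < dimL t" for i
    using x unit_vec_lat[OF that] form_unit_vec[of t x i] that unfolding dual_def by auto
  have pow3: "3 ^ k * x i \<in> \<int>" if "i < dimL t" for i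
    using latD[OF k that] by simp
  show "x i \<in> \<int>" if "i < dimL t" "i \<noteq> 1"
  proof (rule Ints_of_double_and_pow3[OF _ pow3[OF that(1)]])
    have "2 * x i = gramd i * x i \<or> 2 * x i = - (gramd i * x i)"
      using that(2) by (simp add: gramd_def)
    then show "2 * x i \<in> \<int>" using dual_coord[OF that(1)] by (metis Ints_minus)
  qed
  show "3 * x 1 \<in> \<int>"
  proof (rule Ints_of_double_and_pow3)
    show "2 * (3 * x 1) \<in> \<int>" using dual_coord[of 1] by (simp add: gramd_def dimL_def)
    show "3 ^ k * (3 * x 1) \<in> \<int>"
      using Ints_mult[OF _ pow3[of 1], of 3] by (simp add: algebra_simps dimL_def)
  qed
qed

lemma z3_reversing_rev_mat:
  assumes t: "2 \<le> t"
  shows "z3_reversing t rev_mat"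
  unfolding z3_reversing_def
proof (intro ballI impI)
  fix x assume xd: "x \<in> dual t" and "\<exists>k::nat. (\<lambda>i. 3 ^ k * x i) \<in> lat t"
  then obtain k :: nat where k: "(\<lambda>i. 3 ^ k * x i) \<in> lat t" by blast
  have xv: "x \<in> vecs t" using xd by (simp add: dual_def)
  have n: "4 \<le> dimL t" using t by (simp add: dimL_def)
  note xi = discr3_coords(1)[OF xd k] and x1 = discr3_coords(2)[OF xd k]
  have x023: "x 0 \<in> \<int>" "x 2 \<in> \<int>" "x 3 \<in> \<int>" using xi n by auto
  show "(\<lambda>i. matapp t rev_mat x i + x i) \<in> lat t"
  proof (rule latI)
    show "(\<lambda>i. matapp t rev_mat x i + x i) \<in> vecs t"
      using vecs_lincomb[OF matapp_vecs xv, of 1] by simp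
    fix i assume i: "i < dimL t"
    consider "i = 0" | "i = 1" | "i = 2" | "i = 3" | "4 \<le> i" by linarith
    then have "rev_map x i + x i \<in> \<int>"
    proof cases
      case 1
      then have "rev_map x i + x i = 4 * x 0 + 3 * x 1 + 2 * x 2 + x 3" by (simp add: rev_map_def)
      then show ?thesis using x023 x1 by (metis Ints_add Ints_mult Ints_numeral)
    next
      case 3
      then have "rev_map x i + x i = - 2 * x 0 - 3 * x 1 - x 3" by (simp add: rev_map_def)
      then show ?thesis using x023 x1 by (metis Ints_diff Ints_mult Ints_numeral Ints_minus)
    next
      case 5
      then show ?thesis using xi[OF i] by (simp add: rev_map_def)
    qed (use x023 in \<open>auto simp: rev_map_def intro!: Ints_diff Ints_minus\<close>)
    then show "matapp t rev_mat x i + x i \<in> \<int>" using matapp_rev_mat[OF t xv] by simp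
  qed
qed

lemma hyperplane_form_decomp:
  fixes a b c d :: int
  assumes "3 * a + 3 * b + c + d = 0"
  shows "6 * b^2 + 2 * c^2 + 2 * d^2 - 2 * a^2 = (2 * c + 3 * a + 3 * b)^2 + 7 * a^2 + 18 * (a * b) + 15 * b^2"
    and "49 * a^2 + 126 * (a * b) + 105 * b^2 = (7 * a + 9 * b)^2 + 24 * b^2"
    and "105 * a^2 + 270 * (a * b) + 225 * b^2 = (9 * a + 15 * b)^2 + 24 * a^2"
proof -
  have d: "d = - 3 * a - 3 * b - c" using assms by simp
  show "6 * b^2 + 2 * c^2 + 2 * d^2 - 2 * a^2
      = (2 * c + 3 * a + 3 * b)^2 + 7 * a^2 + 18 * (a * b) + 15 * b^2"
    unfolding d by (simp add: power2_eq_square algebra_simps)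
qed (simp_all add: power2_eq_square algebra_simps)

lemma hyperplane_form_nonneg:
  fixes a b c d :: int
  assumes "3 * a + 3 * b + c + d = 0"
  shows "0 \<le> 3 * b^2 + c^2 + d^2 - a^2"
  using hyperplane_form_decomp[OF assms] zero_le_power2[of "7 * a + 9 * b"] zero_le_power2[of b]
    zero_le_power2[of "2 * c + 3 * a + 3 * b"]
  by linarith

lemma abs_less_of_power2_less:
  fixes x m :: int
  assumes "x^2 < m^2" "0 \<le> m"
  shows "\<bar>x\<bar> < m"
  using assms power2_less_imp_less[of "\<bar>x\<bar>" m] by simp

lemma hyperplane_form_small_values:
  fixes a b c d :: int
  assumes h: "3 * a + 3 * b + c + d = 0" and q: "3 * b^2 + c^2 + d^2 - a^2 \<le> 3"
  shows "3 * b^2 + c^2 + d^2 - a^2 \<noteq> 1"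
    and "3 * b^2 + c^2 + d^2 - a^2 = 3 \<Longrightarrow> \<not> (3 dvd a \<and> 3 dvd c \<and> 3 dvd d)"
proof -
  note D = hyperplane_form_decomp[OF h]
  have sq: "0 \<le> (7 * a + 9 * b)^2" "0 \<le> (9 * a + 15 * b)^2" "0 \<le> (2 * c + 3 * a + 3 * b)^2"
    "0 \<le> a^2" "0 \<le> b^2" "0 \<le> d^2"
    by simp_all
  have "b^2 < 4" using D sq q by linarith
  then have B: "b \<in> {-1, 0, 1}" using abs_less_of_power2_less[of b 2] by auto
  have "a^2 < 4" using D sq q by linarith
  then have A: "a \<in> {-1, 0, 1}" using abs_less_of_power2_less[of a 2] by auto
  then have "a^2 \<le> 1" by auto
  then have "c^2 < 9" using sq q by linarith
  then have C: "c \<in> {-2, -1, 0, 1, 2}" using abs_less_of_power2_less[of c 3] by auto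
  have "d = - 3 * a - 3 * b - c" using h by simp
  then show "3 * b^2 + c^2 + d^2 - a^2 \<noteq> 1"
    and "3 * b^2 + c^2 + d^2 - a^2 = 3 \<Longrightarrow> \<not> (3 dvd a \<and> 3 dvd c \<and> 3 dvd d)"
    using A B C by (simp_all add: power2_eq_square) (elim disjE; simp)+
qed

lemma even_sum_power2_minus_sum:
  fixes w :: "nat \<Rightarrow> int"
  shows "even ((\<Sum>i\<in>A. (w i)^2) - (\<Sum>i\<in>A. w i))"
proof -
  have "(\<Sum>i\<in>A. (w i)^2) - (\<Sum>i\<in>A. w i) = (\<Sum>i\<in>A. w i * (w i - 1))"
    by (simp add: sum_subtractf[symmetric] power2_eq_square algebra_simps)
  then show ?thesis by (simp add: dvd_sum)
qed

lemma of_int_add_sqrt_2_eq_0: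
  fixes N S :: int
  assumes "of_int N + sqrt 2 / 5 * of_int S = 0"
  shows "N = 0 \<and> S = 0"
proof -
  have "S = 0"
  proof (rule ccontr)
    assume "S \<noteq> 0"
    then have "sqrt 2 = - 5 * of_int N / of_int S" using assms by (simp add: field_simps)
    then have "sqrt 2 \<in> \<rat>" by simp
    then show False using sqrt_2_not_rat by simp
  qed
  then show ?thesis using assms by simp
qed

text \<open>A point fixed by \<^const>\<open>rev_mat\<close>; the irrational tail makes it orthogonal to no root.\<close>

definition fixed_point :: "nat \<Rightarrow> nat \<Rightarrow> real" where
  "fixed_point t = (\<lambda>i. if i = 0 then 3 else if i < 4 then -1 else if i < dimL t then sqrt 2 / 10 else 0)"

lemma fixed_point_vecs: "2 \<le> t \<Longrightarrow> fixed_point t \<in> vecs t"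
  by (auto simp: fixed_point_def vecs_def dimL_def)

lemma rev_mat_fixed_point: "2 \<le> t \<Longrightarrow> matapp t rev_mat (fixed_point t) = fixed_point t"
  by (simp add: matapp_rev_mat fixed_point_vecs) (auto simp: rev_map_def fixed_point_def)

lemma fixed_point_negative:
  assumes t: "2 \<le> t" "t \<le> 9"
  shows "form t (fixed_point t) (fixed_point t) < 0"
proof -
  have "(\<Sum>i\<in>{4..<dimL t}. 2 * fixed_point t i * fixed_point t i) = (\<Sum>i\<in>{4..<dimL t}. 1 / 25)"
    by (rule sum.cong) (auto simp: fixed_point_def power2_eq_square[symmetric])
  also have "\<dots> = real (t - 2) / 25" by (simp add: dimL_def)
  finally show ?thesis
    using t by (simp add: form_split4 fixed_point_def)
qed

lemma form_fixed_point:
  assumes t: "2 \<le> t" and v: "v \<in> lat t"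
  shows "form t (fixed_point t) v =
    of_int (- 6 * \<lfloor>v 0\<rfloor> - 6 * \<lfloor>v 1\<rfloor> - 2 * \<lfloor>v 2\<rfloor> - 2 * \<lfloor>v 3\<rfloor>) + sqrt 2 / 5 * of_int (\<Sum>i\<in>{4..<dimL t}. \<lfloor>v i\<rfloor>)"
proof -
  have n: "4 \<le> dimL t" using t by (simp add: dimL_def)
  have "(\<Sum>i\<in>{4..<dimL t}. 2 * fixed_point t i * v i) = (\<Sum>i\<in>{4..<dimL t}. sqrt 2 / 5 * of_int \<lfloor>v i\<rfloor>)"
    by (rule sum.cong) (auto simp: fixed_point_def intro: lat_eq_of_int_floor[OF v])
  moreover have "v i = of_int \<lfloor>v i\<rfloor>" if "i < 4" for i
    using lat_eq_of_int_floor[OF v] that n by simp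
  ultimately show ?thesis
    by (simp add: form_split4[OF t] fixed_point_def sum_distrib_left)
qed

lemma fixed_point_orthogonal_coords:
  assumes t: "2 \<le> t" and v: "v \<in> lat t" and orth: "form t (fixed_point t) v = 0"
  shows "3 * \<lfloor>v 0\<rfloor> + 3 * \<lfloor>v 1\<rfloor> + \<lfloor>v 2\<rfloor> + \<lfloor>v 3\<rfloor> = 0" and "(\<Sum>i\<in>{4..<dimL t}. \<lfloor>v i\<rfloor>) = 0"
proof -
  have "- 6 * \<lfloor>v 0\<rfloor> - 6 * \<lfloor>v 1\<rfloor> - 2 * \<lfloor>v 2\<rfloor> - 2 * \<lfloor>v 3\<rfloor> = 0 \<and> (\<Sum>i\<in>{4..<dimL t}. \<lfloor>v i\<rfloor>) = 0"
    using orth form_fixed_point[OF t v] by (intro of_int_add_sqrt_2_eq_0) simp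
  then show "3 * \<lfloor>v 0\<rfloor> + 3 * \<lfloor>v 1\<rfloor> + \<lfloor>v 2\<rfloor> + \<lfloor>v 3\<rfloor> = 0" and "(\<Sum>i\<in>{4..<dimL t}. \<lfloor>v i\<rfloor>) = 0"
    by simp_all
qed

lemma root_not_orthogonal_coords:
  assumes t: "2 \<le> t" and r: "is_root t v"
    and h: "3 * \<lfloor>v 0\<rfloor> + 3 * \<lfloor>v 1\<rfloor> + \<lfloor>v 2\<rfloor> + \<lfloor>v 3\<rfloor> = 0" and S0: "(\<Sum>i\<in>{4..<dimL t}. \<lfloor>v i\<rfloor>) = 0"
  shows False
proof -
  have n: "4 \<le> dimL t" using t by (simp add: dimL_def)
  define w where "w i = \<lfloor>v i\<rfloor>" for i
  have vw: "v i = of_int (w i)" if "i < dimL t" for i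
    using lat_eq_of_int_floor[OF root_lat[OF r] that] unfolding w_def .
  define Q where "Q = (\<Sum>i\<in>{4..<dimL t}. (w i)^2)"
  define q where "q = 3 * (w 1)^2 + (w 2)^2 + (w 3)^2 - (w 0)^2"
  have Qe: "even Q" using even_sum_power2_minus_sum[of w "{4..<dimL t}"] S0 unfolding Q_def w_def by simp
  have Q0: "0 \<le> Q" unfolding Q_def by (rule sum_nonneg) simp
  have q0: "0 \<le> q" using hyperplane_form_nonneg[OF h] unfolding q_def w_def .
  have small: "q \<le> 3 \<Longrightarrow> q \<noteq> 1" "q = 3 \<Longrightarrow> \<not> (3 dvd w 0 \<and> 3 dvd w 2 \<and> 3 dvd w 3)"
    using hyperplane_form_small_values[OF h] unfolding q_def w_def by auto
  have norm: "form t v v = 2 * of_int q + 2 * of_int Q"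
  proof -
    have "(\<Sum>i\<in>{4..<dimL t}. 2 * v i * v i) = (\<Sum>i\<in>{4..<dimL t}. 2 * of_int ((w i)^2))"
      by (rule sum.cong) (auto simp: vw power2_eq_square)
    moreover have "v i = of_int (w i)" if "i < 4" for i
      using vw that n by simp
    ultimately show ?thesis
      by (simp add: form_split4[OF t] q_def Q_def sum_distrib_left power2_eq_square algebra_simps)
  qed
  consider "form t v v = 2" | "form t v v = 6" using root_norm[OF r] by blast
  then show False
  proof cases
    case 1
    then have "q + Q = 1" using norm by linarith
    then show False using small(1) Qe Q0 q0 by presburger
  next
    case 2
    then have "q + Q = 3" using norm by linarith
    then have "q = 3" using small(1) Qe Q0 q0 by presburger
    moreover have "3 dvd w j" if "j = 0 \<or> j = 2 \<or> j = 3" for j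
      using six_root_coord_dvd[OF r 2] that n unfolding w_def by auto
    ultimately show False using small(2) by blast
  qed
qed

lemma fixed_point_generic:
  assumes t: "2 \<le> t" and r: "is_root t v"
  shows "form t (fixed_point t) v \<noteq> 0"
  using root_not_orthogonal_coords[OF t r] fixed_point_orthogonal_coords[OF t root_lat[OF r]] by blast

theorem achiral_ge2:
  assumes t: "2 \<le> t" "t \<le> 9"
  shows "achiral t"
proof -
  let ?g = "matapp t rev_mat" and ?x = "fixed_point t"
  have i: "isometry t ?g ?g" using isometry_rev_mat[OF t(1)] .
  have cell: "is_cell_lift t (chamber t ?x)"
    unfolding is_cell_lift_def negcone_def
    using fixed_point_vecs[OF t(1)] fixed_point_negative[OF t] fixed_point_generic[OF t(1)] by auto
  have into: "?g w \<in> chamber t ?x" if "w \<in> chamber t ?x" for w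
    using isometry_chamber[OF i fixed_point_vecs[OF t(1)] that] rev_mat_fixed_point[OF t(1)] by simp
  have "?g ` chamber t ?x = chamber t ?x"
  proof
    show "chamber t ?x \<subseteq> ?g ` chamber t ?x"
    proof
      fix w assume w: "w \<in> chamber t ?x"
      then have "w = ?g (?g w)" using isometryD(4)[OF i] by (simp add: chamber_def negcone_def)
      then show "w \<in> ?g ` chamber t ?x" using into[OF w] by blast
    qed
  qed (use into in blast)
  then show ?thesis
    unfolding achiral_def using isometry_is_aut[OF i] z3_reversing_rev_mat[OF t(1)] cell by blast
qed

lemma form_rank3:
  assumes "t \<le> 1" and "x \<in> vecs t"
  shows "form t x y = -2 * x 0 * y 0 + 6 * x 1 * y 1 + 2 * x 2 * y 2"
proof -
  consider "t = 0" | "t = 1" using assms(1) by linarith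
  then show ?thesis
  proof cases
    case 1
    then have "x 2 = 0" using assms(2) by (simp add: vecs_def dimL_def)
    then show ?thesis using 1 by (simp add: form_def dimL_def gramd_def eval_nat_numeral)
  qed (simp add: form_def dimL_def gramd_def eval_nat_numeral)
qed

definition vec3 :: "real \<Rightarrow> real \<Rightarrow> real \<Rightarrow> nat \<Rightarrow> real" where
  "vec3 a b c = (\<lambda>i. if i = 0 then a else if i = 1 then b else if i = 2 then c else 0)"

lemma vec3_apply [simp]: "vec3 a b c 0 = a" "vec3 a b c (Suc 0) = b" "vec3 a b c 2 = c"
  by (simp_all add: vec3_def)

lemma vec3_vecs: "t \<le> 1 \<Longrightarrow> (t = 0 \<Longrightarrow> c = 0) \<Longrightarrow> vec3 a b c \<in> vecs t"
  by (cases "t = 0") (auto simp: vecs_def vec3_def dimL_def)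

lemma vec3_lat:
  "t \<le> 1 \<Longrightarrow> (t = 0 \<Longrightarrow> c = 0) \<Longrightarrow> a \<in> \<int> \<Longrightarrow> b \<in> \<int> \<Longrightarrow> c \<in> \<int> \<Longrightarrow> vec3 a b c \<in> lat t"
  by (rule latI[OF vec3_vecs]) (auto simp: vec3_def)

lemma form_vec3_left:
  "t \<le> 1 \<Longrightarrow> (t = 0 \<Longrightarrow> c = 0) \<Longrightarrow> form t (vec3 a b c) z = -2 * a * z 0 + 6 * b * z 1 + 2 * c * z 2"
  using form_rank3[OF _ vec3_vecs] by simp

lemma form_vec3_right:
  "t \<le> 1 \<Longrightarrow> (t = 0 \<Longrightarrow> c = 0) \<Longrightarrow> form t z (vec3 a b c) = -2 * a * z 0 + 6 * b * z 1 + 2 * c * z 2"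
  using form_vec3_left form_commute by metis

lemma unit_vec_vec3: "unit_vec 0 = vec3 1 0 0" "unit_vec 1 = vec3 0 1 0" "unit_vec 2 = vec3 0 0 1"
  by (auto simp: unit_vec_def vec3_def)

lemma vecs_rank3_eq_vec3:
  assumes "t \<le> 1" and "q \<in> vecs t"
  shows "q = vec3 (q 0) (q 1) (q 2)"
proof
  fix i :: nat
  consider "i = 0" | "i = 1" | "i = 2" | "3 \<le> i" by linarith
  then show "q i = vec3 (q 0) (q 1) (q 2) i"
    using assms by cases (auto simp: vec3_def vecs_def dimL_def)
qed

lemma lat_rank3_Ints:
  assumes "t \<le> 1" and "q \<in> lat t" and "i < 3"
  shows "q i \<in> \<int>"
  using assms by (cases "i < dimL t") (auto simp: lat_def vecs_def)

lemma lat_rank3_obtain: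
  assumes t: "t \<le> 1" and z: "z \<in> lat t"
  obtains a b c :: int where "z = vec3 (of_int a) (of_int b) (of_int c)" and "t = 0 \<Longrightarrow> c = 0"
proof -
  have zi: "z i = of_int \<lfloor>z i\<rfloor>" if "i < 3" for i
    using lat_rank3_Ints[OF t z that] by (metis Ints_cases floor_of_int)
  have "z = vec3 (of_int \<lfloor>z 0\<rfloor>) (of_int \<lfloor>z 1\<rfloor>) (of_int \<lfloor>z 2\<rfloor>)"
    using vecs_rank3_eq_vec3[OF t lat_imp_vecs[OF z]] zi[of 0] zi[of 1] zi[of 2] by simp
  moreover have "t = 0 \<Longrightarrow> \<lfloor>z 2\<rfloor> = 0" using z by (auto simp: lat_def vecs_def dimL_def)
  ultimately show ?thesis using that by blast
qed

text \<open>In signature \<open>(1, 2)\<close> the reversed Cauchy--Schwarz inequality \<open>(z\<cdot>w)\<^sup>2 \<ge> z\<^sup>2 w\<^sup>2\<close>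
  for negative vectors says that the sign of \<open>z\<cdot>w\<close> is decided by the \<open>-A\<^sub>1\<close>-coordinates.\<close>

lemma negative_pair_form:
  assumes t: "t \<le> 1" and z: "z \<in> vecs t" "form t z z < 0" and w: "w \<in> vecs t" "form t w w < 0"
  shows "form t z w < 0 \<longleftrightarrow> z 0 * w 0 > 0" and "form t z w \<noteq> 0"
proof -
  define A where "A = 6 * z 1 * w 1 + 2 * z 2 * w 2"
  define Z where "Z = 6 * (z 1)^2 + 2 * (z 2)^2"
  define W where "W = 6 * (w 1)^2 + 2 * (w 2)^2"
  have zw: "form t z w = -2 * (z 0 * w 0) + A" using form_rank3[OF t z(1)] by (simp add: A_def)
  have Zl: "Z < 2 * (z 0)^2" using z(2) form_rank3[OF t z(1), of z] by (simp add: Z_def power2_eq_square)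
  have Wl: "W < 2 * (w 0)^2" using w(2) form_rank3[OF t w(1), of w] by (simp add: W_def power2_eq_square)
  have "Z * W - A^2 = 12 * (z 1 * w 2 - z 2 * w 1)^2"
    unfolding A_def Z_def W_def by (simp add: power2_eq_square algebra_simps)
  then have "A^2 \<le> Z * W" using zero_le_power2[of "z 1 * w 2 - z 2 * w 1"] by linarith
  also have "Z * W \<le> Z * (2 * (w 0)^2)" using Wl by (intro mult_left_mono) (auto simp: Z_def)
  also have "\<dots> < (2 * (z 0)^2) * (2 * (w 0)^2)"
  proof (rule mult_strict_right_mono[OF Zl])
    have "0 \<le> W" by (simp add: W_def)
    then show "0 < 2 * (w 0)^2" using Wl by linarith
  qed
  finally have "\<bar>A\<bar>^2 < \<bar>2 * (z 0 * w 0)\<bar>^2" by (simp add: power2_eq_square algebra_simps)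
  then have "\<bar>A\<bar> < \<bar>2 * (z 0 * w 0)\<bar>" by (rule power_less_imp_less_base) simp
  then show "form t z w < 0 \<longleftrightarrow> z 0 * w 0 > 0" and "form t z w \<noteq> 0"
    unfolding zw by (auto simp: abs_if split: if_splits)
qed

lemma negative_form_neg_trans:
  assumes t: "t \<le> 1" and a: "a \<in> vecs t" "form t a a < 0" and b: "b \<in> vecs t" "form t b b < 0"
    and c: "c \<in> vecs t" "form t c c < 0" and ab: "form t a b < 0" and bc: "form t b c < 0"
  shows "form t a c < 0"
proof -
  have "a 0 * b 0 > 0" "b 0 * c 0 > 0"
    using negative_pair_form(1)[OF t a b] negative_pair_form(1)[OF t b c] ab bc by simp_all
  then have "a 0 * c 0 > 0" by (auto simp: zero_less_mult_iff)
  then show ?thesis using negative_pair_form(1)[OF t a c] by simp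
qed

lemma finite_lat_rank3_box:
  assumes t: "t \<le> 1"
  shows "finite {q \<in> lat t. \<forall>i<3. \<bar>q i\<bar> \<le> B}"
proof -
  let ?I = "{-\<lceil>B\<rceil>..\<lceil>B\<rceil>}"
  have I: "k \<in> ?I" if "\<bar>real_of_int k\<bar> \<le> B" for k
  proof -
    have "k \<le> \<lceil>B\<rceil>" "- k \<le> \<lceil>B\<rceil>" using that by (simp_all add: abs_le_iff le_ceiling_iff)
    then show ?thesis by simp
  qed
  have "{q \<in> lat t. \<forall>i<3. \<bar>q i\<bar> \<le> B}
      \<subseteq> (\<lambda>(a, b, c). vec3 (of_int a) (of_int b) (of_int c)) ` (?I \<times> ?I \<times> ?I)"
  proof
    fix q assume "q \<in> {q \<in> lat t. \<forall>i<3. \<bar>q i\<bar> \<le> B}"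
    then have q: "q \<in> lat t" "\<And>i. i < 3 \<Longrightarrow> \<bar>q i\<bar> \<le> B" by auto
    obtain a b c :: int where e: "q = vec3 (of_int a) (of_int b) (of_int c)"
      using lat_rank3_obtain[OF t q(1)] by blast
    have "a \<in> ?I" "b \<in> ?I" "c \<in> ?I"
      using I q(2)[of 0] q(2)[of 1] q(2)[of 2] unfolding e by simp_all
    then show "q \<in> (\<lambda>(a, b, c). vec3 (of_int a) (of_int b) (of_int c)) ` (?I \<times> ?I \<times> ?I)"
      unfolding e by force
  qed
  then show ?thesis by (rule finite_subset) simp
qed

lemma negative_coords_le_first:
  assumes t: "t \<le> 1" and q: "q \<in> vecs t" "form t q q < 0"
  shows "\<bar>q 1\<bar> \<le> \<bar>q 0\<bar>" and "\<bar>q 2\<bar> \<le> \<bar>q 0\<bar>"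
proof -
  have "6 * (q 1)^2 + 2 * (q 2)^2 < 2 * (q 0)^2"
    using q(2) form_rank3[OF t q(1), of q] by (simp add: power2_eq_square)
  then have "(q 1)^2 \<le> (q 0)^2" "(q 2)^2 \<le> (q 0)^2"
    using zero_le_power2[of "q 1"] zero_le_power2[of "q 2"] by linarith+
  then show "\<bar>q 1\<bar> \<le> \<bar>q 0\<bar>" and "\<bar>q 2\<bar> \<le> \<bar>q 0\<bar>" by (simp_all add: abs_le_square_iff)
qed

lemma negative_first_coord_bound:
  assumes t: "t \<le> 1" and x: "x \<in> vecs t" "form t x x < 0" and q: "q \<in> vecs t" "form t q q < 0"
    and xq: "form t x q < 0" "- form t x q \<le> K"
  shows "\<bar>q 0\<bar> \<le> 2 * \<bar>x 0\<bar> * K / (- form t x x)"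
proof -
  define X where "X = - form t x x"
  define D where "D = - form t x q"
  define P where "P = x 0 * q 0"
  define A where "A = 6 * x 1 * q 1 + 2 * x 2 * q 2"
  define X' where "X' = 6 * (x 1)^2 + 2 * (x 2)^2"
  define Q' where "Q' = 6 * (q 1)^2 + 2 * (q 2)^2"
  have X0: "X > 0" and D0: "0 < D" "D \<le> K" using x(2) xq by (auto simp: X_def D_def)
  have eA: "A = 2 * P - D" using form_rank3[OF t x(1), of q] by (simp add: A_def D_def P_def)
  have eX: "X' = 2 * (x 0)^2 - X" using form_rank3[OF t x(1), of x] by (simp add: X'_def X_def power2_eq_square)
  have "Q' \<le> 2 * (q 0)^2" using q(2) form_rank3[OF t q(1), of q] by (simp add: Q'_def power2_eq_square)
  have "X' * Q' - A^2 = 12 * (x 1 * q 2 - x 2 * q 1)^2"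
    unfolding X'_def Q'_def A_def by (simp add: power2_eq_square algebra_simps)
  then have "A^2 \<le> X' * Q'" using zero_le_power2[of "x 1 * q 2 - x 2 * q 1"] by linarith
  also have "X' * Q' \<le> X' * (2 * (q 0)^2)"
    using \<open>Q' \<le> 2 * (q 0)^2\<close> by (intro mult_left_mono) (simp_all add: X'_def)
  finally have "(2 * P - D)^2 \<le> (2 * (x 0)^2 - X) * (2 * (q 0)^2)" using eA eX by simp
  moreover have "(2 * P - D)^2 = 4 * P^2 - 4 * (P * D) + D^2"
    by (simp add: power2_eq_square algebra_simps)
  moreover have "(2 * (x 0)^2 - X) * (2 * (q 0)^2) = 4 * P^2 - 2 * (X * (q 0)^2)"
    by (simp add: P_def power2_eq_square algebra_simps)
  moreover have "P * D \<le> \<bar>P\<bar> * K"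
    using D0 by (intro order_trans[OF mult_right_mono[of P "\<bar>P\<bar>" D] mult_left_mono]) auto
  ultimately have "2 * (X * (q 0)^2) \<le> 4 * (\<bar>P\<bar> * K)"
    using zero_le_power2[of D] by linarith
  then have "\<bar>q 0\<bar> * (X * \<bar>q 0\<bar>) \<le> \<bar>q 0\<bar> * (2 * \<bar>x 0\<bar> * K)"
    by (simp add: P_def abs_mult power2_eq_square algebra_simps)
  then have "q 0 \<noteq> 0 \<Longrightarrow> X * \<bar>q 0\<bar> \<le> 2 * \<bar>x 0\<bar> * K"
    by (simp add: mult_le_cancel_left_pos)
  then have "\<bar>q 0\<bar> \<le> 2 * \<bar>x 0\<bar> * K / X"
    using X0 D0 by (cases "q 0 = 0") (simp_all add: field_simps)
  then show ?thesis by (simp add: X_def)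
qed

lemma finite_lat_norm_slab:
  assumes t: "t \<le> 1" and x: "x \<in> vecs t" "form t x x < 0" and c: "c < 0"
  shows "finite {q \<in> lat t. form t q q = c \<and> form t x q < 0 \<and> - form t x q \<le> K}"
proof (rule finite_subset[OF _ finite_lat_rank3_box[OF t, of "2 * \<bar>x 0\<bar> * K / (- form t x x)"]])
  have "\<bar>q i\<bar> \<le> 2 * \<bar>x 0\<bar> * K / (- form t x x)"
    if "q \<in> lat t" "form t q q = c" "form t x q < 0" "- form t x q \<le> K" "i < 3" for q i
  proof -
    have q: "q \<in> vecs t" "form t q q < 0" using that(1,2) c lat_imp_vecs by auto
    have "i = 0 \<or> i = 1 \<or> i = 2" using that(5) by auto
    then show ?thesis
      using negative_first_coord_bound[OF t x q that(3,4)] negative_coords_le_first[OF t q] by auto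
  qed
  then show "{q \<in> lat t. form t q q = c \<and> form t x q < 0 \<and> - form t x q \<le> K}
      \<subseteq> {q \<in> lat t. \<forall>i<3. \<bar>q i\<bar> \<le> 2 * \<bar>x 0\<bar> * K / (- form t x x)}"
    by blast
qed

lemma exists_isometry_same_sheet:
  assumes t: "t \<le> 1" and p: "p \<in> vecs t" "form t p p < 0" and x: "x \<in> vecs t" "form t x x < 0"
  shows "\<exists>h h'. isometry t h h' \<and> form t x (h p) < 0"
proof (cases "form t x p < 0")
  case True
  then show ?thesis using isometry_id by blast
next
  case False
  then have "form t x p > 0" using negative_pair_form(2)[OF t x p] by linarith
  moreover have "form t x (\<lambda>i. - p i) = - form t x p"
    using form_uminus form_commute by metis
  ultimately show ?thesis using isometry_uminus by fastforce
qed

lemma exists_nearest_orbit_point: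
  assumes t: "t \<le> 1" and p: "p \<in> lat t" "form t p p < 0" and x: "x \<in> vecs t" "form t x x < 0"
  obtains h h' where "isometry t h h'" and "form t x (h p) < 0"
    and "\<And>g g'. isometry t g g' \<Longrightarrow> form t x (g p) < 0 \<Longrightarrow> form t x (g p) \<le> form t x (h p)"
proof -
  have pv: "p \<in> vecs t" using lat_imp_vecs[OF p(1)] .
  obtain h0 h0' where h0: "isometry t h0 h0'" "form t x (h0 p) < 0"
    using exists_isometry_same_sheet[OF t pv p(2) x] by blast
  define M where "M = {q. (\<exists>h h'. isometry t h h' \<and> q = h p) \<and> form t x q < 0 \<and> form t x (h0 p) \<le> form t x q}"
  have "M \<subseteq> {q \<in> lat t. form t q q = form t p p \<and> form t x q < 0 \<and> - form t x q \<le> - form t x (h0 p)}"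
  proof
    fix q assume "q \<in> M"
    then obtain h h' where "isometry t h h'" "q = h p" "form t x q < 0" "form t x (h0 p) \<le> form t x q"
      unfolding M_def by blast
    then show "q \<in> {q \<in> lat t. form t q q = form t p p \<and> form t x q < 0 \<and> - form t x q \<le> - form t x (h0 p)}"
      using isometryD(6)[of t h h' p p] isometryD(7)[of t h h' p] p(1) pv by simp
  qed
  then have "finite M" using finite_lat_norm_slab[OF t x p(2)] by (rule finite_subset)
  moreover have "M \<noteq> {}" using h0 unfolding M_def by blast
  ultimately obtain q0 where "q0 \<in> M" and q0_min: "\<And>q. q \<in> M \<Longrightarrow> form t x q \<le> form t x q0"
    using arg_min_if_finite[of M "\<lambda>q. - form t x q"] by (metis neg_le_iff_le not_le)
  then obtain h h' where h: "isometry t h h'" and q0: "q0 = h p" "form t x q0 < 0" "form t x (h0 p) \<le> form t x q0"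
    unfolding M_def by blast
  show ?thesis
  proof (rule that[OF h])
    show "form t x (h p) < 0" using q0 by simp
    fix g g' assume "isometry t g g'" "form t x (g p) < 0"
    then show "form t x (g p) \<le> form t x (h p)"
      using q0_min[of "g p"] q0 unfolding M_def by fastforce
  qed
qed

text \<open>If \<open>h\<inverse> x\<close> violated a wall \<open>r\<close>, reflecting \<open>h p\<close> in the root \<open>h r\<close> would bring it
  nearer to \<open>x\<close>.\<close>

lemma exists_isometry_into_cone:
  assumes t: "t \<le> 1" and p: "p \<in> lat t" "form t p p < 0"
    and W: "\<forall>r\<in>W. is_root t r \<and> form t p r < 0"
    and x: "x \<in> vecs t" "form t x x < 0" and x_generic: "\<forall>v. is_root t v \<longrightarrow> form t x v \<noteq> 0"
  shows "\<exists>f f'. isometry t f f' \<and> (\<forall>r\<in>W. form t (f x) r < 0)"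
proof -
  obtain h h' where h: "isometry t h h'" and hp: "form t x (h p) < 0"
    and nearest: "\<And>g g'. isometry t g g' \<Longrightarrow> form t x (g p) < 0 \<Longrightarrow> form t x (g p) \<le> form t x (h p)"
    using exists_nearest_orbit_point[OF t p x] by blast
  note H = isometryD[OF h]
  have pv: "p \<in> vecs t" using lat_imp_vecs[OF p(1)] .
  have "form t (h' x) r < 0" if "r \<in> W" for r
  proof (rule ccontr)
    assume violated: "\<not> form t (h' x) r < 0"
    have r: "is_root t r" "form t p r < 0" using W that by auto
    define u where "u = h r"
    have u: "is_root t u" unfolding u_def using isometry_root[OF h r(1)] .
    have "form t (h' x) r = form t x u"
      using isometry_form_inverse[OF isometry_inverse[OF h] x(1) root_vecs[OF r(1)]] H(4)[OF root_vecs[OF r(1)]]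
      unfolding u_def by (simp add: form_commute)
    then have xu: "form t x u > 0" using violated x_generic u by force
    have pu: "form t (h p) u < 0" unfolding u_def using H(6)[OF pv root_vecs[OF r(1)]] r(2) by simp
    have gt: "form t x (reflection t u (h p)) > form t x (h p)"
      using form_reflection_gt[OF root_norm_pos[OF u] pu xu] .
    have "form t (h p) (reflection t u (h p)) < 0"
      using form_reflection_le[OF root_norm_pos[OF u], of "h p"] H(6)[OF pv pv] p(2) by simp
    then have "form t x (reflection t u (h p)) < 0"
      using negative_form_neg_trans[OF t x H(2)[OF pv] _ isometryD(2)[OF isometry_reflection[OF u] H(2)[OF pv]] _ hp]
        isometryD(6)[OF isometry_reflection[OF u] H(2)[OF pv] H(2)[OF pv]] H(6)[OF pv pv] p(2)
      by simp
    then show False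
      using nearest[OF isometry_comp[OF h isometry_reflection[OF u]]] gt by force
  qed
  then show ?thesis using isometry_inverse[OF h] by blast
qed

section \<open>Chirality for t at most 1\<close>

definition cone :: "nat \<Rightarrow> (nat \<Rightarrow> real) set \<Rightarrow> (nat \<Rightarrow> real) set" where
  "cone t W = {z \<in> vecs t. \<forall>r\<in>W. form t z r < 0}"

lemma cone_lincomb:
  assumes "y \<in> cone t W" "z \<in> cone t W" "a > 0" "b > 0"
  shows "(\<lambda>i. a * y i + b * z i) \<in> cone t W"
proof -
  have "form t (\<lambda>i. a * y i + b * z i) r = a * form t y r + b * form t z r" for r
    using form_lincomb[of t a y "\<lambda>i. b * z i" r] form_scale[of t b z r] by simp
  then show ?thesis
    using assms vecs_lincomb[of y t "\<lambda>i. b * z i" a] vecs_scale[of z t b]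
    by (auto simp: cone_def add_neg_neg mult_pos_neg)
qed

text \<open>If the cone is free of mirrors, every root has the same sign on all of it.\<close>

lemma cone_in_chamber:
  assumes generic: "\<And>z. z \<in> cone t W \<Longrightarrow> form t z z < 0 \<and> (\<forall>v. is_root t v \<longrightarrow> form t z v \<noteq> 0)"
    and p_y: "form t p y < 0" and p: "p \<in> cone t W" and y: "y \<in> cone t W"
  shows "p \<in> chamber t y"
proof -
  have "sgn (form t p v) = sgn (form t y v)" if v: "is_root t v" for v
  proof (rule ccontr)
    assume opposite: "sgn (form t p v) \<noteq> sgn (form t y v)"
    define a where "a = form t y v"
    define b where "b = form t p v"
    have "a \<noteq> 0" "b \<noteq> 0" using generic p y v unfolding a_def b_def by blast+
    then have "\<bar>b\<bar> * a + \<bar>a\<bar> * b = 0"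
      using opposite unfolding a_def[symmetric] b_def[symmetric]
      by (cases "a > 0"; cases "b > 0") (auto simp: sgn_if)
    moreover have "form t (\<lambda>i. \<bar>b\<bar> * y i + \<bar>a\<bar> * p i) v = \<bar>b\<bar> * a + \<bar>a\<bar> * b"
      using form_lincomb[of t "\<bar>b\<bar>" y "\<lambda>i. \<bar>a\<bar> * p i" v] form_scale[of t "\<bar>a\<bar>" p v]
      unfolding a_def b_def by simp
    moreover have "(\<lambda>i. \<bar>b\<bar> * y i + \<bar>a\<bar> * p i) \<in> cone t W"
      using cone_lincomb[OF y p] \<open>a \<noteq> 0\<close> \<open>b \<noteq> 0\<close> by simp
    ultimately show False using generic v by auto
  qed
  then show ?thesis
    using p generic[OF p] p_y form_commute[of t y p] by (simp add: chamber_def negcone_def cone_def)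
qed

lemma chamber_in_cone:
  assumes "\<forall>r\<in>W. is_root t r" and "y \<in> cone t W" and "z \<in> chamber t y"
  shows "z \<in> cone t W"
proof -
  have "form t z r < 0" if "r \<in> W" for r
  proof -
    have "sgn (form t z r) = sgn (form t y r)" "form t y r < 0"
      using assms that by (auto simp: chamber_def cone_def)
    then show ?thesis by (simp add: sgn_if split: if_splits)
  qed
  then show ?thesis using assms(3) by (simp add: chamber_def negcone_def cone_def)
qed

text \<open>Every cell is mapped into the cone by an isometry \<open>f\<close>, so an automorphism \<open>g\<close> preserving a
  cell yields the isometry \<open>F = f g f\<inverse>\<close> mapping \<open>p\<close> into the cone.\<close>

lemma chiral_if_cone_isometries_fix:
  assumes t: "t \<le> 1" and W: "\<forall>r\<in>W. is_root t r" and p: "p \<in> lat t" "p \<in> cone t W"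
    and generic: "\<And>z. z \<in> cone t W \<Longrightarrow> form t z z < 0 \<and> (\<forall>v. is_root t v \<longrightarrow> form t z v \<noteq> 0)"
    and same_sheet: "\<And>z. z \<in> cone t W \<Longrightarrow> form t p z < 0"
    and q: "q \<in> lat t" "(\<lambda>i. (q i - unit_vec 1 i) / 3) \<in> lat t"
    and fixing: "\<And>F F'. isometry t F F' \<Longrightarrow> F p \<in> cone t W \<Longrightarrow> F q = q"
  shows "chiral t"
proof -
  have False if g: "is_aut t g" "z3_reversing t g" and C: "is_cell_lift t C" "matapp t g ` C = C" for g C
  proof -
    obtain x where x: "x \<in> vecs t" "form t x x < 0" and x_generic: "\<forall>v. is_root t v \<longrightarrow> form t x v \<noteq> 0"
      and Cx: "C = chamber t x"
      using C(1) unfolding is_cell_lift_def negcone_def by blast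
    have "\<forall>r\<in>W. is_root t r \<and> form t p r < 0" using W p(2) by (simp add: cone_def)
    then obtain f f' where f: "isometry t f f'" and "\<forall>r\<in>W. form t (f x) r < 0"
      using exists_isometry_into_cone[OF t p(1) generic[OF p(2), THEN conjunct1] _ x x_generic] by blast
    then have y: "f x \<in> cone t W" using isometryD(2)[OF f x(1)] by (simp add: cone_def)
    define F where "F = (\<lambda>z. f (matapp t g (f' z)))"
    have F: "isometry t F (\<lambda>z. f (aut_inverse t g (f' z)))"
      unfolding F_def using isometry_comp[OF isometry_comp[OF isometry_inverse[OF f] is_aut_isometry[OF g(1)]] f] .
    have "p \<in> chamber t (f x)" using cone_in_chamber[OF generic same_sheet[OF y] p(2) y] .
    then have "f' p \<in> chamber t x"
      using isometry_chamber[OF isometry_inverse[OF f] isometryD(2)[OF f x(1)]] isometryD(4)[OF f x(1)] by simp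
    then have "matapp t g (f' p) \<in> chamber t x" using C(2) Cx by blast
    then have "F p \<in> cone t W"
      unfolding F_def using chamber_in_cone[OF W y] isometry_chamber[OF f x(1)] by blast
    then have "F q = q" using fixing[OF F] by simp
    moreover have "(\<lambda>i. 3 ^ 1 * (unit_vec 1 i / 3)) \<in> lat t" using unit_vec_lat[of 1 t] by (simp add: dimL_def)
    then have "(\<lambda>i. F (\<lambda>i. unit_vec 1 i / 3) i + unit_vec 1 i / 3) \<in> lat t"
      unfolding F_def using z3_reversing_conjugate[OF g f third_unit_vec_dual] by blast
    ultimately show False using fixing_imp_not_reversing[OF F q] by blast
  qed
  then show ?thesis unfolding chiral_def achiral_def by blast
qed

lemma is_root_vec3:
  fixes a b c :: int
  assumes t: "t \<le> 1" and c0: "t = 0 \<Longrightarrow> c = 0"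
    and n: "3 * b^2 + c^2 - a^2 = 1 \<or> (3 * b^2 + c^2 - a^2 = 3 \<and> 3 dvd a \<and> 3 dvd c)"
  shows "is_root t (vec3 (of_int a) (of_int b) (of_int c))" (is "is_root t ?v")
proof -
  have c0': "t = 0 \<Longrightarrow> real_of_int c = 0" using c0 by simp
  have l: "?v \<in> lat t" by (rule vec3_lat[OF t c0']) auto
  define k where "k = 3 * b^2 + c^2 - a^2"
  have f: "form t ?v ?v = 2 * of_int k"
    using form_vec3_left[OF t c0'] by (simp add: k_def power2_eq_square)
  have "\<exists>k::int. form t ?v y = 3 * of_int k" if y: "y \<in> lat t" "3 dvd a" "3 dvd c" for y
  proof -
    obtain a' c' where a': "a = 3 * a'" and c': "c = 3 * c'" using y(2,3) by (auto elim!: dvdE)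
    obtain y0 y1 y2 :: int where ye: "y = vec3 (of_int y0) (of_int y1) (of_int y2)"
      using lat_rank3_obtain[OF t y(1)] by blast
    have "form t ?v y = - 2 * of_int a * of_int y0 + 6 * of_int b * of_int y1 + 2 * of_int c * of_int y2"
      using form_vec3_left[OF t c0'] unfolding ye by simp
    also have "\<dots> = 3 * of_int (- 2 * a' * y0 + 2 * b * y1 + 2 * c' * y2)"
      by (simp add: a' c' algebra_simps)
    finally have "form t ?v y = 3 * of_int (- 2 * a' * y0 + 2 * b * y1 + 2 * c' * y2)" .
    then show ?thesis by blast
  qed
  then show ?thesis
    using n l unfolding is_root_def f k_def[symmetric] by (elim disjE conjE) simp_all
qed

lemma root_rank3_obtain:
  assumes t: "t \<le> 1" and r: "is_root t v"
  obtains a b c :: int where "v = vec3 (of_int a) (of_int b) (of_int c)" and "t = 0 \<Longrightarrow> c = 0"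
    and "3 * b^2 + c^2 - a^2 = 1 \<or> (3 * b^2 + c^2 - a^2 = 3 \<and> 3 dvd a)"
proof -
  obtain a b c :: int where v: "v = vec3 (of_int a) (of_int b) (of_int c)" and c0: "t = 0 \<Longrightarrow> c = 0"
    using lat_rank3_obtain[OF t root_lat[OF r]] by blast
  define k where "k = 3 * b^2 + c^2 - a^2"
  have nv: "form t v v = 2 * of_int k"
    unfolding v k_def using form_vec3_left[OF t, of "of_int c"] c0 by (simp add: power2_eq_square)
  then have "k = 1 \<or> k = 3" using root_norm[OF r] by auto
  moreover have "3 dvd a" if "k = 3"
    using six_root_coord_dvd[OF r _, of 0] nv that unfolding v by (simp add: dimL_def)
  ultimately show ?thesis using that[OF v c0] unfolding k_def by blast
qed

text \<open>For \<open>a > 0\<close> these bounds say that the root \<open>(a, b, c)\<close> pairs nonpositively with the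
  vertices \<open>(1,0,0), (2,1,0), (2,1,1), (1,0,1)\<close> of the cone below.\<close>

lemma root_coords_bounds:
  fixes a b c :: int
  assumes a: "1 \<le> a" and n: "3 * b^2 + c^2 - a^2 = 1 \<or> (3 * b^2 + c^2 - a^2 = 3 \<and> 3 dvd a)"
  shows "3 * b \<le> 2 * a" and "c \<le> a" and "3 * b + c \<le> 2 * a"
proof -
  define k where "k = 3 * b^2 + c^2 - a^2"
  have small: "\<not> 4 * a + 1 \<le> 4 * k" using a n unfolding k_def[symmetric] by presburger
  have sq: "x^2 \<le> y^2" if "0 \<le> x" "x \<le> y" for x y :: int using that by (simp add: power_mono)
  have pos: "0 \<le> b^2" "0 \<le> c^2" "0 \<le> (b - c)^2" by simp_all
  have expand: "(2 * a + 1)^2 = 4 * a^2 + 4 * a + 1" "(3 * b)^2 = 9 * b^2" "(a + 1)^2 = a^2 + 2 * a + 1"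
    "(3 * b + c)^2 = 9 * b^2 + 6 * (b * c) + c^2" "(b - c)^2 = b^2 - 2 * (b * c) + c^2"
    by (simp_all add: power2_eq_square algebra_simps)
  show "3 * b \<le> 2 * a"
  proof (rule ccontr)
    assume "\<not> 3 * b \<le> 2 * a"
    then have "(2 * a + 1)^2 \<le> (3 * b)^2" using a by (intro sq) auto
    then show False using small pos k_def expand by linarith
  qed
  show "c \<le> a"
  proof (rule ccontr)
    assume "\<not> c \<le> a"
    then have "(a + 1)^2 \<le> c^2" using a by (intro sq) auto
    then show False using small pos k_def expand a by linarith
  qed
  show "3 * b + c \<le> 2 * a"
  proof (rule ccontr)
    assume "\<not> 3 * b + c \<le> 2 * a"
    then have "(2 * a + 1)^2 \<le> (3 * b + c)^2" using a by (intro sq) auto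
    then show False using small pos k_def expand by linarith
  qed
qed

lemma cone_pairing_lt:
  fixes a b c :: int and z0 z1 z2 :: real
  assumes z: "0 < z1" "2 * z1 < z0" "0 \<le> z2" "c \<noteq> 0 \<longrightarrow> 0 < z2 \<and> z1 + z2 < z0"
    and bounds: "3 * b \<le> 2 * a" "c \<le> a" "3 * b + c \<le> 2 * a" and a: "1 \<le> a"
  shows "3 * of_int b * z1 + of_int c * z2 < of_int a * z0"
proof -
  have z0: "0 < z0" using z by linarith
  have bounds': "3 * real_of_int b \<le> 2 * of_int a" "real_of_int c \<le> of_int a"
    "3 * real_of_int b + of_int c \<le> 2 * of_int a" "1 \<le> real_of_int a"
    using bounds a by linarith+
  consider "c \<le> 0" | "0 < c" "3 * b \<le> c" | "0 < c" "c < 3 * b" by linarith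
  then show ?thesis
  proof cases
    case 1
    have "of_int c * z2 \<le> 0" using 1 z(3) by (simp add: mult_nonpos_nonneg)
    moreover have "3 * of_int b * z1 < of_int a * z0"
    proof (cases "b \<le> 0")
      case True
      then have "3 * of_int b * z1 \<le> 0" using z(1) by (simp add: mult_nonpos_nonneg)
      moreover have "0 < of_int a * z0" using z0 bounds'(4) by simp
      ultimately show ?thesis by linarith
    next
      case False
      then have "3 * of_int b * z1 < 3 * of_int b * (z0 / 2)" using z(2) by simp
      also have "\<dots> \<le> of_int a * z0" using bounds'(1) z0 by (simp add: mult_right_mono)
      finally show ?thesis .
    qed
    ultimately show ?thesis by linarith
  next
    case 2
    have "of_int c * z2 < of_int c * (z0 - z1)" using 2 z(4) by simp
    moreover have "(3 * of_int b - of_int c) * z1 \<le> 0" using 2 z(1) by (simp add: mult_nonpos_nonneg)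
    moreover have "of_int c * z0 \<le> of_int a * z0" using bounds'(2) z0 by (simp add: mult_right_mono)
    ultimately show ?thesis by (simp add: algebra_simps)
  next
    case 3
    have "of_int c * z2 < of_int c * (z0 - z1)" using 3 z(4) by simp
    moreover have "(3 * of_int b - of_int c) * z1 < (3 * of_int b - of_int c) * (z0 / 2)"
      using 3 z(2) by (intro mult_strict_left_mono) auto
    moreover have "(3 * of_int b + of_int c) * z0 \<le> (2 * of_int a) * z0"
      using bounds'(3) z0 by (simp add: mult_right_mono)
    ultimately show ?thesis by (simp add: algebra_simps)
  qed
qed

lemma cone_root_form_nonzero:
  assumes t: "t \<le> 1" and z: "z \<in> vecs t" "0 < z 1" "2 * z 1 < z 0"
    and z2: "t = 1 \<Longrightarrow> 0 < z 2 \<and> z 1 + z 2 < z 0" and r: "is_root t v"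
  shows "form t z v \<noteq> 0"
proof -
  obtain a b c :: int where v: "v = vec3 (of_int a) (of_int b) (of_int c)" and c0: "t = 0 \<Longrightarrow> c = 0"
    and n: "3 * b^2 + c^2 - a^2 = 1 \<or> (3 * b^2 + c^2 - a^2 = 3 \<and> 3 dvd a)"
    using root_rank3_obtain[OF t r] by blast
  have "form t z v = -2 * of_int a * z 0 + 6 * of_int b * z 1 + 2 * of_int c * z 2"
    unfolding v by (rule form_vec3_right[OF t]) (simp add: c0)
  then have zv: "form t z v = 2 * (3 * of_int b * z 1 + of_int c * z 2 - of_int a * z 0)"
    by (simp add: algebra_simps)
  have "t = 0 \<Longrightarrow> z 2 = 0" using z(1) by (simp add: vecs_def dimL_def)
  then have z2': "0 \<le> z 2" "c \<noteq> 0 \<longrightarrow> 0 < z 2 \<and> z 1 + z 2 < z 0"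
    using z2 c0 t by (cases "t = 0"; auto)+
  consider "a = 0" | "1 \<le> a" | "a \<le> -1" by linarith
  then show ?thesis
  proof cases
    case 1
    then have "3 * b^2 + c^2 = 1 \<or> 3 * b^2 + c^2 = 3" using n by simp
    have "(b = 0 \<and> c \<noteq> 0) \<or> (b \<noteq> 0 \<and> c = 0)"
    proof (cases "b = 0")
      case False
      then have "0 < b^2" by simp
      then have "c^2 \<le> 0" using \<open>3 * b^2 + c^2 = 1 \<or> 3 * b^2 + c^2 = 3\<close> by linarith
      then show ?thesis using False by simp
    qed (use \<open>3 * b^2 + c^2 = 1 \<or> 3 * b^2 + c^2 = 3\<close> in auto)
    then show ?thesis using zv 1 z(2) z2'(2) by auto
  next
    case 2
    then show ?thesis
      using cone_pairing_lt[OF z(2,3) z2' root_coords_bounds[OF 2 n] 2] unfolding zv by simp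
  next
    case 3
    then have a': "1 \<le> - a" by simp
    have n': "3 * (- b)^2 + (- c)^2 - (- a)^2 = 1 \<or> (3 * (- b)^2 + (- c)^2 - (- a)^2 = 3 \<and> 3 dvd - a)"
      using n by simp
    have "3 * of_int (- b) * z 1 + of_int (- c) * z 2 < of_int (- a) * z 0"
      by (rule cone_pairing_lt[OF z(2,3) z2'(1) _ root_coords_bounds[OF a' n'] a']) (use z2'(2) in simp)
    then show ?thesis unfolding zv by simp
  qed
qed

lemma cone_vec_negative:
  assumes t: "t \<le> 1" and z: "z \<in> vecs t" "0 < z 1" "2 * z 1 < z 0"
    and z2: "t = 1 \<Longrightarrow> 0 < z 2 \<and> z 1 + z 2 < z 0"
  shows "form t z z < 0"
proof -
  have "(z 2)^2 < (z 0 - z 1)^2"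
  proof (cases "t = 0")
    case True
    then show ?thesis using z by (simp add: vecs_def dimL_def)
  next
    case False
    then show ?thesis using z2 t by (simp add: power_strict_mono)
  qed
  moreover have "- 2 * (z 0)^2 + 6 * (z 1)^2 + 2 * (z 0 - z 1)^2 = 4 * (z 1 * (2 * z 1 - z 0))"
    by (simp add: power2_eq_square algebra_simps)
  moreover have "z 1 * (2 * z 1 - z 0) < 0" using z(2,3) by (simp add: mult_pos_neg)
  moreover have "form t z z = - 2 * (z 0)^2 + 6 * (z 1)^2 + 2 * (z 2)^2"
    using form_rank3[OF t z(1)] by (simp add: power2_eq_square)
  ultimately show ?thesis by linarith
qed

text \<open>The walls of the cell for \<open>t \<le> 1\<close>; \<open>r\<^sub>2\<close> and \<open>r\<^sub>3\<close> lie in \<open>L\<close> only for \<open>t = 1\<close>.\<close>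

definition r1 :: "nat \<Rightarrow> real" where "r1 = vec3 0 (-1) 0"
definition r2 :: "nat \<Rightarrow> real" where "r2 = vec3 0 0 (-1)"
definition r3 :: "nat \<Rightarrow> real" where "r3 = vec3 3 1 3"
definition r4 :: "nat \<Rightarrow> real" where "r4 = vec3 3 2 0"

lemma roots_r1_r4: "t \<le> 1 \<Longrightarrow> is_root t r1" "t \<le> 1 \<Longrightarrow> is_root t r4"
  using is_root_vec3[of t 0 "-1" 0] is_root_vec3[of t 0 2 3] by (simp_all add: r1_def r4_def)

lemma roots_r2_r3: "is_root 1 r2" "is_root 1 r3"
  using is_root_vec3[of 1 "-1" 0 0] is_root_vec3[of 1 3 1 3] by (simp_all add: r2_def r3_def)

lemma cone0_iff: "z \<in> cone 0 {r1, r4} \<longleftrightarrow> z \<in> vecs 0 \<and> 0 < z 1 \<and> 2 * z 1 < z 0"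
  by (auto simp: cone_def r1_def r4_def form_vec3_right)

lemma cone1_iff:
  "z \<in> cone 1 {r1, r2, r3, r4} \<longleftrightarrow> z \<in> vecs 1 \<and> 0 < z 1 \<and> 2 * z 1 < z 0 \<and> 0 < z 2 \<and> z 1 + z 2 < z 0"
  by (auto simp: cone_def r1_def r2_def r3_def r4_def form_vec3_right)

lemma int_sq_eq_9: "0 < z \<Longrightarrow> z^2 = (9::int) \<Longrightarrow> z = 3"
proof -
  assume "0 < z" "z^2 = 9"
  then have "(z - 3) * (z + 3) = 0" by (simp add: power2_eq_square algebra_simps)
  then show "z = 3" using \<open>0 < z\<close> by auto
qed

lemma cone0_lat_point:
  assumes q: "q \<in> lat 0" "q \<in> cone 0 {r1, r4}" and n: "form 0 q q = -12"
  shows "q = vec3 3 1 0"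
proof -
  obtain a b c :: int where qe: "q = vec3 (of_int a) (of_int b) (of_int c)" and "c = 0"
    using lat_rank3_obtain[OF _ q(1)] by auto
  then have qe: "q = vec3 (of_int a) (of_int b) 0" by simp
  have "0 < real_of_int b" "real_of_int (2 * b) < of_int a" using q(2) unfolding cone0_iff qe by simp_all
  then have b: "1 \<le> b" and ab: "2 * b + 1 \<le> a" by linarith+
  have "real_of_int (- 2 * a^2 + 6 * b^2) = - 12"
    using n unfolding qe by (simp add: form_vec3_left power2_eq_square)
  then have a2: "a^2 = 3 * b^2 + 6" by linarith
  have "(2 * b + 1)^2 \<le> a^2" using b ab by (intro power_mono) auto
  moreover have "(2 * b + 1)^2 = 4 * b^2 + 4 * b + 1" by (simp add: power2_eq_square algebra_simps)
  moreover have "b \<le> b^2" using b by (simp add: power2_eq_square)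
  ultimately have "b = 1" using a2 b by linarith
  then have "a = 3" using a2 ab int_sq_eq_9[of a] by simp
  then show ?thesis using \<open>b = 1\<close> qe by simp
qed

lemma cone1_lat_point:
  assumes q: "q \<in> lat 1" "q \<in> cone 1 {r1, r2, r3, r4}" and n: "form 1 q q = -10"
  shows "q = vec3 3 1 1"
proof -
  obtain a b c :: int where qe: "q = vec3 (of_int a) (of_int b) (of_int c)"
    using lat_rank3_obtain[OF _ q(1)] by auto
  have "0 < real_of_int b" "real_of_int (2 * b) < of_int a" "0 < real_of_int c" "real_of_int (b + c) < of_int a"
    using q(2) unfolding cone1_iff qe by simp_all
  then have b: "1 \<le> b" and c: "1 \<le> c" and ab: "2 * b + 1 \<le> a" and abc: "b + c + 1 \<le> a" by linarith+
  have "real_of_int (- 2 * a^2 + 6 * b^2 + 2 * c^2) = - 10"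
    using n unfolding qe by (simp add: form_vec3_left power2_eq_square)
  then have a2: "a^2 = 3 * b^2 + c^2 + 5" by linarith
  have bc: "b = 1 \<and> c = 1"
  proof (cases "b \<le> c")
    case True
    have "(b + c + 1)^2 \<le> a^2" using b c abc by (intro power_mono) auto
    moreover have "(b + c + 1)^2 = b^2 + c^2 + 2 * (b * c) + 2 * b + 2 * c + 1"
      by (simp add: power2_eq_square algebra_simps)
    moreover have "b^2 \<le> b * c" using True b by (simp add: power2_eq_square)
    ultimately have "b + c \<le> 2" using a2 by linarith
    then show ?thesis using b c by presburger
  next
    case False
    have "(2 * b + 1)^2 \<le> a^2" using b ab by (intro power_mono) auto
    moreover have "c^2 \<le> (b - 1)^2" using False c by (intro power_mono) auto
    moreover have "(2 * b + 1)^2 = 4 * b^2 + 4 * b + 1" "(b - 1)^2 = b^2 - 2 * b + 1"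
      by (simp_all add: power2_eq_square algebra_simps)
    ultimately show ?thesis using a2 b by linarith
  qed
  then have "a = 3" using a2 abc int_sq_eq_9[of a] by simp
  then show ?thesis using bc qe by simp
qed

lemma lat1_norm2_point:
  assumes u: "u \<in> lat 1" and n: "form 1 u u = 2" and pu: "form 1 (vec3 3 1 1) u = 2"
  shows "u = unit_vec 2"
proof -
  obtain a b c :: int where ue: "u = vec3 (of_int a) (of_int b) (of_int c)"
    using lat_rank3_obtain[OF _ u] by auto
  have "real_of_int (- 6 * a + 6 * b + 2 * c) = 2" using pu unfolding ue by (simp add: form_vec3_left)
  then have "- 6 * a + 6 * b + 2 * c = 2" by (simp only: of_int_eq_numeral_iff)
  then have c_eq: "c = 1 - 3 * (b - a)" by presburger
  define d where "d = b - a"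
  have "real_of_int (- 2 * a^2 + 6 * b^2 + 2 * c^2) = 2"
    using n unfolding ue by (simp add: form_vec3_left power2_eq_square)
  then have "- 2 * a^2 + 6 * b^2 + 2 * c^2 = 2" by (simp only: of_int_eq_numeral_iff)
  then have "(2 * b + d)^2 + 3 * (d * (5 * d - 4)) = 0"
    unfolding c_eq d_def by (simp add: power2_eq_square algebra_simps)
  moreover have "0 \<le> d * (5 * d - 4)"
    by (cases "d \<le> 0") (simp_all add: mult_nonpos_nonpos)
  ultimately have "(2 * b + d)^2 = 0" "d * (5 * d - 4) = 0"
    using zero_le_power2[of "2 * b + d"] by linarith+
  then have "2 * b + d = 0" "d = 0 \<or> 5 * d = 4" by simp_all
  then have "d = 0" "b = 0" by presburger+
  then have "a = 0" "b = 0" "c = 1" using c_eq d_def by simp_all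
  then show ?thesis unfolding ue by (simp add: unit_vec_vec3)
qed

lemma vec3_3_1_0_minus_unit_vec1: "(\<lambda>i. (vec3 3 1 0 i - unit_vec 1 i) / 3) = unit_vec 0"
  by (auto simp: vec3_def unit_vec_def)

lemma cone0_isometry_fixes:
  assumes F: "isometry 0 F F'" "F (vec3 3 1 0) \<in> cone 0 {r1, r4}"
  shows "F (vec3 3 1 0) = vec3 3 1 0"
proof (rule cone0_lat_point[OF _ F(2)])
  have p: "vec3 3 1 0 \<in> lat 0" by (rule vec3_lat) auto
  show "F (vec3 3 1 0) \<in> lat 0" using isometryD(7)[OF F(1) p] .
  show "form 0 (F (vec3 3 1 0)) (F (vec3 3 1 0)) = -12"
    using isometryD(6)[OF F(1) lat_imp_vecs[OF p] lat_imp_vecs[OF p]] by (simp add: form_vec3_left)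
qed

lemma cone1_isometry_fixes:
  assumes F: "isometry 1 F F'" "F (vec3 3 1 1) \<in> cone 1 {r1, r2, r3, r4}"
  shows "F (vec3 3 1 0) = vec3 3 1 0"
proof -
  note D = isometryD[OF F(1)]
  have p: "vec3 3 1 1 \<in> lat 1" by (rule vec3_lat) auto
  have pv: "vec3 3 1 1 \<in> vecs 1" and e2: "unit_vec 2 \<in> lat 1"
    using lat_imp_vecs[OF p] unit_vec_lat[of 2 1] by (simp_all add: dimL_def)
  have Fp: "F (vec3 3 1 1) = vec3 3 1 1"
  proof (rule cone1_lat_point[OF _ F(2)])
    show "F (vec3 3 1 1) \<in> lat 1" using D(7)[OF p] .
    show "form 1 (F (vec3 3 1 1)) (F (vec3 3 1 1)) = -10"
      using D(6)[OF pv pv] by (simp add: form_vec3_left)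
  qed
  have Fe2: "F (unit_vec 2) = unit_vec 2"
  proof (rule lat1_norm2_point)
    show "F (unit_vec 2) \<in> lat 1" using D(7)[OF e2] .
    show "form 1 (F (unit_vec 2)) (F (unit_vec 2)) = 2"
      using D(6)[OF lat_imp_vecs[OF e2] lat_imp_vecs[OF e2]]
      by (simp add: form_unit_vec dimL_def gramd_def) (simp add: unit_vec_def)
    show "form 1 (vec3 3 1 1) (F (unit_vec 2)) = 2"
      using D(6)[OF pv lat_imp_vecs[OF e2]] Fp by (simp add: form_vec3_left unit_vec_def)
  qed
  have "vec3 3 1 0 = (\<lambda>i. vec3 3 1 1 i - unit_vec 2 i)" by (auto simp: vec3_def unit_vec_def)
  then show ?thesis
    using linear_on_diff[OF D(1) pv lat_imp_vecs[OF e2]] Fp Fe2 by simp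
qed

lemma chiral0: "chiral 0"
proof (rule chiral_if_cone_isometries_fix[where W = "{r1, r4}" and p = "vec3 3 1 0" and q = "vec3 3 1 0"])
  show "(0::nat) \<le> 1" by simp
  show p: "vec3 3 1 0 \<in> lat 0" by (rule vec3_lat) auto
  then show "vec3 3 1 0 \<in> lat 0" .
  show "\<forall>r\<in>{r1, r4}. is_root 0 r" using roots_r1_r4 by simp
  show "vec3 3 1 0 \<in> cone 0 {r1, r4}" by (simp add: cone0_iff vec3_vecs)
  show "form 0 z z < 0 \<and> (\<forall>v. is_root 0 v \<longrightarrow> form 0 z v \<noteq> 0)" if "z \<in> cone 0 {r1, r4}" for z
    using that cone_vec_negative[of 0 z] cone_root_form_nonzero[of 0 z] by (simp add: cone0_iff)
  show "form 0 (vec3 3 1 0) z < 0" if "z \<in> cone 0 {r1, r4}" for z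
    using that by (simp add: cone0_iff form_vec3_left)
  show "(\<lambda>i. (vec3 3 1 0 i - unit_vec 1 i) / 3) \<in> lat 0"
    unfolding vec3_3_1_0_minus_unit_vec1 by (simp add: unit_vec_lat dimL_def)
qed (rule cone0_isometry_fixes)

lemma chiral1: "chiral 1"
proof (rule chiral_if_cone_isometries_fix[where W = "{r1, r2, r3, r4}" and p = "vec3 3 1 1" and q = "vec3 3 1 0"])
  show "(1::nat) \<le> 1" by simp
  show "vec3 3 1 1 \<in> lat 1" "vec3 3 1 0 \<in> lat 1" by (rule vec3_lat; simp)+
  show "\<forall>r\<in>{r1, r2, r3, r4}. is_root 1 r" using roots_r1_r4 roots_r2_r3 by simp
  show "vec3 3 1 1 \<in> cone 1 {r1, r2, r3, r4}" unfolding cone1_iff by (simp add: vec3_vecs)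
  show "form 1 z z < 0 \<and> (\<forall>v. is_root 1 v \<longrightarrow> form 1 z v \<noteq> 0)" if "z \<in> cone 1 {r1, r2, r3, r4}" for z
    using that[unfolded cone1_iff] cone_vec_negative[of 1 z] cone_root_form_nonzero[of 1 z] by simp
  show "form 1 (vec3 3 1 1) z < 0" if "z \<in> cone 1 {r1, r2, r3, r4}" for z
    using that[unfolded cone1_iff] by (simp add: form_vec3_left)
  show "(\<lambda>i. (vec3 3 1 0 i - unit_vec 1 i) / 3) \<in> lat 1"
    unfolding vec3_3_1_0_minus_unit_vec1 by (simp add: unit_vec_lat dimL_def)
qed (rule cone1_isometry_fixes)

theorem proposition4p6:
  fixes t :: nat
  assumes "t \<le> 9"
  shows "(t \<le> 1 \<longrightarrow> chiral t) \<and> (2 \<le> t \<longrightarrow> achiral t)"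
proof (intro conjI impI)
  assume "t \<le> 1"
  then consider "t = 0" | "t = 1" by linarith
  then show "chiral t" using chiral0 chiral1 by cases simp_all
next
  assume "2 \<le> t"
  then show "achiral t" using achiral_ge2 assms by blast
qed

end
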